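(* Let $x\sim\nu$, uniform on $\mathcal S^{d-1}(\sqrt d)$, let $q:\mathbb R\to\mathbb R$ be $L$-Lipschitz with $|q(0)|\le L$, and let $x^TAx,x^TBx$ be two orthogonal degree 2 spherical harmonics. Then $\big|\mathbb E[q(x^TAx)x^TBx]\big|\le CL\big(\sqrt{\|A\|_{op}\log d}+\|B\|_{op}\log d\big)$ for an absolute constant $C$.
   Context: $x^TAx$ is a degree 2 spherical harmonic if $A$ is symmetric, $\mathbb E[x^TAx]=0$, $\mathbb E[(x^TAx)^2]=1$; orthogonal means $\mathbb E[(x^TAx)(x^TBx)]=0$. *)

theory Defs
  imports "HOL-Analysis.Analysis"
begin

text \<open>Vectors in R^d are functions nat => real restricted to the index set {..<d};
  R^d carries the product Lebesgue measure.\<close>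

definition lebR :: "nat \<Rightarrow> (nat \<Rightarrow> real) measure" where
  "lebR d = PiM {..<d} (\<lambda>_. lborel)"

definition sqnorm :: "nat \<Rightarrow> (nat \<Rightarrow> real) \<Rightarrow> real" where
  "sqnorm d x = (\<Sum>i<d. (x i)^2)"

text \<open>Uniform probability measure on the sphere of radius sqrt d in R^d:
  the radial projection of the uniform distribution on the unit ball
  (cone measure = normalized surface measure for the sphere).\<close>

definition sphere_unif :: "nat \<Rightarrow> (nat \<Rightarrow> real) measure" where
  "sphere_unif d =
     distr (uniform_measure (lebR d) {y \<in> space (lebR d). sqnorm d y < 1}) (lebR d)
       (\<lambda>y. restrict (\<lambda>i. sqrt (real d) / sqrt (sqnorm d y) * y i) {..<d})"

definition qform :: "nat \<Rightarrow> (nat \<Rightarrow> nat \<Rightarrow> real) \<Rightarrow> (nat \<Rightarrow> real) \<Rightarrow> real" where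
  "qform d A x = (\<Sum>i<d. \<Sum>j<d. x i * A i j * x j)"

definition opnorm :: "nat \<Rightarrow> (nat \<Rightarrow> nat \<Rightarrow> real) \<Rightarrow> real" where
  "opnorm d A = Sup {sqrt (\<Sum>i<d. (\<Sum>j<d. A i j * x j)^2) | x. sqnorm d x \<le> 1}"

definition symmetric_mat :: "nat \<Rightarrow> (nat \<Rightarrow> nat \<Rightarrow> real) \<Rightarrow> bool" where
  "symmetric_mat d A \<longleftrightarrow> (\<forall>i<d. \<forall>j<d. A i j = A j i)"

definition sph_harm2 :: "nat \<Rightarrow> (nat \<Rightarrow> nat \<Rightarrow> real) \<Rightarrow> bool" where
  "sph_harm2 d A \<longleftrightarrow> symmetric_mat d A
     \<and> (\<integral>x. qform d A x \<partial>sphere_unif d) = 0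
     \<and> (\<integral>x. (qform d A x)^2 \<partial>sphere_unif d) = 1"

definition orth_harm2 :: "nat \<Rightarrow> (nat \<Rightarrow> nat \<Rightarrow> real) \<Rightarrow> (nat \<Rightarrow> nat \<Rightarrow> real) \<Rightarrow> bool" where
  "orth_harm2 d A B \<longleftrightarrow> (\<integral>x. qform d A x * qform d B x \<partial>sphere_unif d) = 0"

end

theory Submission
  imports Defs "HOL-Probability.Probability_Measure"
begin

text \<open>
  The uniform measure on the sphere is invariant under the rotations in each coordinate plane.
  Differentiating this invariance shows that for every bounded smooth F the derivative of F
  along the generator x_i d_j - x_j d_i integrates to zero. Applied to
  F = p(x'Ax) (x_i d_j - x_j d_i)(x'Bx) and summed over all planes this yields the
  Stein-type identity
    E[p(x'Ax) x'Bx] = tr B E[p(x'Ax)] + (2/d) E[p'(x'Ax) (d <Ax, Bx> - x'Ax x'Bx)].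
  With p = 1 and p = id it computes the first two moments of quadratic forms: a harmonic B is
  traceless with |B|_F^2 = (d+2)/(2d), and orthogonality of harmonics means tr(AB) = 0.
  For |p'| <= L the right-hand side is then at most 5 L |A|_op, which passes to Lipschitz q
  by approximating q uniformly by smooth averages. Since |A|_op <= |A|_F <= 1 and
  ln d >= 1/2, this is stronger than the claim.
\<close>

section \<open>Invariance of the sphere measure under plane rotations\<close>

interpretation lborel_product: product_sigma_finite "(\<lambda>_. lborel) :: nat \<Rightarrow> real measure"
  by (simp add: product_sigma_finite_def sigma_finite_lborel)

lemma space_lebR: "space (lebR d) = PiE {..<d} (\<lambda>_. UNIV)"
  by (simp add: lebR_def space_PiM)

lemma measurable_coord_lebR: "k < d \<Longrightarrow> (\<lambda>x. x k) \<in> borel_measurable (lebR d)"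
  using measurable_component_singleton[of k "{..<d}" "\<lambda>_. lborel"] unfolding lebR_def by simp

lemma measurable_sqnorm [measurable]: "sqnorm d \<in> borel_measurable (lebR d)"
  unfolding sqnorm_def lebR_def
  by (intro borel_measurable_sum borel_measurable_power measurable_component_singleton) auto

definition shear :: "nat \<Rightarrow> nat \<Rightarrow> nat \<Rightarrow> real \<Rightarrow> (nat \<Rightarrow> real) \<Rightarrow> (nat \<Rightarrow> real)" where
  "shear d i j c x = restrict (\<lambda>k. if k = i then x i + c * x j else x k) {..<d}"

lemma measurable_shear:
  assumes "i < d" "j < d"
  shows "shear d i j c \<in> measurable (lebR d) (lebR d)"
  unfolding shear_def lebR_def
proof (rule measurable_restrict)
  fix k assume "k \<in> {..<d}"
  then show "(\<lambda>x. if k = i then x i + c * x j else x k) \<in> measurable (PiM {..<d} (\<lambda>_. lborel)) lborel"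
    using assms by (cases "k = i") (auto intro!: borel_measurable_add borel_measurable_times)
qed

lemma nn_integral_shear:
  assumes ij: "i < d" "j < d" "i \<noteq> j" and f: "f \<in> borel_measurable (lebR d)"
  shows "(\<integral>\<^sup>+x. f (shear d i j c x) \<partial>lebR d) = (\<integral>\<^sup>+x. f x \<partial>lebR d)"
proof -
  define I where "I = {..<d} - {i}"
  have I: "insert i I = {..<d}" "finite I" "i \<notin> I" using ij by (auto simp: I_def)
  have fm: "f \<in> borel_measurable (PiM (insert i I) (\<lambda>_. lborel))"
    using f by (simp add: I lebR_def)
  have fsm: "(\<lambda>x. f (shear d i j c x)) \<in> borel_measurable (PiM (insert i I) (\<lambda>_. lborel))"
    using measurable_comp[OF measurable_shear[OF ij(1,2)] f] by (simp add: I lebR_def comp_def)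
  have "(\<integral>\<^sup>+x. f (shear d i j c x) \<partial>lebR d)
      = (\<integral>\<^sup>+x. (\<integral>\<^sup>+y. f (shear d i j c (x(i := y))) \<partial>lborel) \<partial>PiM I (\<lambda>_. lborel))"
    unfolding lebR_def I(1)[symmetric] by (rule lborel_product.product_nn_integral_insert[OF I(2,3) fsm])
  also have "\<dots> = (\<integral>\<^sup>+x. (\<integral>\<^sup>+y. f (x(i := y)) \<partial>lborel) \<partial>PiM I (\<lambda>_. lborel))"
  proof (rule nn_integral_cong)
    fix x assume x: "x \<in> space (PiM I (\<lambda>_. lborel :: real measure))"
    have shear_upd: "shear d i j c (x(i := y)) = x(i := c * x j + y)" for y
      using x ij unfolding shear_def by (auto simp: space_PiM PiE_def extensional_def I_def fun_eq_iff)
    have "(\<lambda>y. x(i := y)) \<in> measurable lborel (PiM (insert i I) (\<lambda>_. lborel))"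
      by (rule measurable_fun_upd[where J=I]) (use x in auto)
    from measurable_comp[OF this fm]
    have "(\<lambda>y. f (x(i := y))) \<in> borel_measurable lborel" by (simp add: comp_def)
    then have "(\<integral>\<^sup>+y. f (x(i := c * x j + y)) \<partial>lborel) = (\<integral>\<^sup>+y. f (x(i := y)) \<partial>distr lborel borel ((+) (c * x j)))"
      by (subst nn_integral_distr) auto
    then show "(\<integral>\<^sup>+y. f (shear d i j c (x(i := y))) \<partial>lborel) = (\<integral>\<^sup>+y. f (x(i := y)) \<partial>lborel)"
      by (simp add: shear_upd lborel_distr_plus)
  qed
  also have "\<dots> = (\<integral>\<^sup>+x. f x \<partial>lebR d)"
    unfolding lebR_def I(1)[symmetric] by (rule lborel_product.product_nn_integral_insert[OF I(2,3) fm, symmetric])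
  finally show ?thesis .
qed

lemma distr_shear_lebR:
  assumes ij: "i < d" "j < d" "i \<noteq> j"
  shows "distr (lebR d) (lebR d) (shear d i j c) = lebR d"
proof (rule measure_eqI)
  fix A assume "A \<in> sets (distr (lebR d) (lebR d) (shear d i j c))"
  then have A: "A \<in> sets (lebR d)" by simp
  have "emeasure (distr (lebR d) (lebR d) (shear d i j c)) A
      = (\<integral>\<^sup>+x. indicator A x \<partial>distr (lebR d) (lebR d) (shear d i j c))"
    using A by simp
  also have "\<dots> = (\<integral>\<^sup>+x. indicator A (shear d i j c x) \<partial>lebR d)"
    by (rule nn_integral_distr[OF measurable_shear[OF ij(1,2)]]) (use A in simp)
  also have "\<dots> = (\<integral>\<^sup>+x. indicator A x \<partial>lebR d)"
    by (rule nn_integral_shear[OF ij]) (use A in simp)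
  finally show "emeasure (distr (lebR d) (lebR d) (shear d i j c)) A = emeasure (lebR d) A"
    using A by simp
qed simp

definition plane_rot :: "nat \<Rightarrow> nat \<Rightarrow> nat \<Rightarrow> real \<Rightarrow> (nat \<Rightarrow> real) \<Rightarrow> (nat \<Rightarrow> real)" where
  "plane_rot d i j t x = restrict (\<lambda>k. if k = i then cos t * x i - sin t * x j
      else if k = j then sin t * x i + cos t * x j else x k) {..<d}"

lemma measurable_plane_rot:
  assumes "i < d" "j < d"
  shows "plane_rot d i j t \<in> measurable (lebR d) (lebR d)"
  unfolding plane_rot_def lebR_def
proof (rule measurable_restrict)
  fix k assume "k \<in> {..<d}"
  then show "(\<lambda>x. if k = i then cos t * x i - sin t * x j else if k = j then sin t * x i + cos t * x j
      else x k) \<in> measurable (PiM {..<d} (\<lambda>_. lborel)) lborel"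
    using assms by (cases "k = i"; cases "k = j")
      (auto intro!: borel_measurable_add borel_measurable_diff borel_measurable_times)
qed

lemma plane_rot_in_space: "plane_rot d i j t x \<in> space (lebR d)"
  by (simp add: plane_rot_def space_lebR)

lemma plane_rot_0: "x \<in> space (lebR d) \<Longrightarrow> plane_rot d i j 0 x = x"
  by (auto simp: plane_rot_def space_lebR PiE_def extensional_def fun_eq_iff)

lemma plane_rot_add:
  assumes "i < d" "j < d" "i \<noteq> j"
  shows "plane_rot d i j s (plane_rot d i j t x) = plane_rot d i j (s + t) x"
  using assms by (auto simp: plane_rot_def fun_eq_iff cos_add sin_add algebra_simps)

text \<open>The classical factorisation of a rotation into three shears, with c = - tan (t/2).\<close>

lemma plane_rot_eq_shears:
  assumes ij: "i < d" "j < d" "i \<noteq> j" and s: "sin t \<noteq> 0"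
  defines "c \<equiv> - ((1 - cos t) / sin t)"
  shows "plane_rot d i j t = shear d i j c \<circ> shear d j i (sin t) \<circ> shear d i j c"
proof
  fix x
  have c_sin: "c * sin t = cos t - 1" using s by (simp add: c_def field_simps)
  have "c * (1 + cos t) = - ((1 - cos t) * (1 + cos t)) / sin t" by (simp add: c_def)
  also have "(1 - cos t) * (1 + cos t) = sin t * sin t"
    using sin_squared_eq[of t] by (simp add: power2_eq_square algebra_simps)
  finally have c_cos: "c * (1 + cos t) = - sin t" using s by simp
  have "x j + sin t * (x i + c * x j) = sin t * x i + (1 + c * sin t) * x j"
    by (simp add: algebra_simps)
  then have second: "x j + sin t * (x i + c * x j) = sin t * x i + cos t * x j"
    by (simp add: c_sin)
  have "x i + c * x j + c * (sin t * x i + cos t * x j) = x i + (c * sin t) * x i + (c * (1 + cos t)) * x j"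
    by (simp add: algebra_simps)
  also have "\<dots> = cos t * x i - sin t * x j"
    unfolding c_sin c_cos by (simp add: left_diff_distrib)
  finally have first: "x i + c * x j + c * (sin t * x i + cos t * x j) = cos t * x i - sin t * x j" .
  show "plane_rot d i j t x = (shear d i j c \<circ> shear d j i (sin t) \<circ> shear d i j c) x"
    using ij unfolding plane_rot_def shear_def comp_def by (auto simp: fun_eq_iff first second)
qed

lemma distr_plane_rot_lebR:
  assumes ij: "i < d" "j < d" "i \<noteq> j" and s: "sin t \<noteq> 0"
  shows "distr (lebR d) (lebR d) (plane_rot d i j t) = lebR d"
proof -
  define c where "c = - ((1 - cos t) / sin t)"
  have m: "shear d i j c \<in> measurable (lebR d) (lebR d)" "shear d j i (sin t) \<in> measurable (lebR d) (lebR d)"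
    using ij by (auto intro: measurable_shear)
  have "distr (lebR d) (lebR d) (plane_rot d i j t)
      = distr (distr (distr (lebR d) (lebR d) (shear d i j c)) (lebR d) (shear d j i (sin t))) (lebR d) (shear d i j c)"
    unfolding plane_rot_eq_shears[OF ij s] c_def[symmetric]
    by (simp add: distr_distr m measurable_comp[OF m(1) m(2)] comp_assoc)
  also have "\<dots> = lebR d" using ij by (simp add: distr_shear_lebR)
  finally show ?thesis .
qed

lemma sum_remove_two:
  assumes "finite S" "i \<in> S" "j \<in> S" "i \<noteq> j"
  shows "sum g S = g i + g j + sum g (S - {i, j})"
proof -
  have "sum g S = g i + sum g (S - {i})" using assms by (simp add: sum.remove)
  also have "sum g (S - {i}) = g j + sum g (S - {i} - {j})" using assms by (intro sum.remove) auto
  finally show ?thesis by (simp add: Diff_insert2[symmetric] insert_commute add.assoc)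
qed

lemma sqnorm_plane_rot:
  assumes ij: "i < d" "j < d" "i \<noteq> j"
  shows "sqnorm d (plane_rot d i j t x) = sqnorm d x"
proof -
  have "(cos t * x i - sin t * x j)^2 + (sin t * x i + cos t * x j)^2
      = ((sin t)^2 + (cos t)^2) * ((x i)^2 + (x j)^2)"
    by algebra
  then have pair: "(plane_rot d i j t x i)^2 + (plane_rot d i j t x j)^2 = (x i)^2 + (x j)^2"
    using ij by (simp add: plane_rot_def)
  have rest: "(\<Sum>k\<in>{..<d} - {i,j}. (plane_rot d i j t x k)^2) = (\<Sum>k\<in>{..<d} - {i,j}. (x k)^2)"
    by (rule sum.cong) (auto simp: plane_rot_def)
  show ?thesis
    unfolding sqnorm_def using ij
    by (simp add: sum_remove_two[of "{..<d}" i j] pair rest)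
qed

lemma distr_plane_rot_uniform_ball:
  assumes ij: "i < d" "j < d" "i \<noteq> j" and s: "sin t \<noteq> 0"
  defines "U \<equiv> {y \<in> space (lebR d). sqnorm d y < 1}"
  shows "distr (uniform_measure (lebR d) U) (lebR d) (plane_rot d i j t) = uniform_measure (lebR d) U"
proof (rule measure_eqI)
  have U: "U \<in> sets (lebR d)" unfolding U_def by measurable
  have rm: "plane_rot d i j t \<in> measurable (uniform_measure (lebR d) U) (lebR d)"
    using measurable_plane_rot[OF ij(1,2)] by (simp add: measurable_cong_sets[OF sets_uniform_measure refl])
  fix A assume "A \<in> sets (distr (uniform_measure (lebR d) U) (lebR d) (plane_rot d i j t))"
  then have A: "A \<in> sets (lebR d)" by simp
  have pre: "plane_rot d i j t -` A \<inter> space (lebR d) \<in> sets (lebR d)"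
    using measurable_plane_rot[OF ij(1,2)] A by (rule measurable_sets)
  have U_pre: "U \<inter> (plane_rot d i j t -` A \<inter> space (lebR d)) = plane_rot d i j t -` (U \<inter> A) \<inter> space (lebR d)"
    unfolding U_def using sqnorm_plane_rot[OF ij] plane_rot_in_space by auto
  have "emeasure (distr (uniform_measure (lebR d) U) (lebR d) (plane_rot d i j t)) A
      = emeasure (lebR d) (U \<inter> (plane_rot d i j t -` A \<inter> space (lebR d))) / emeasure (lebR d) U"
    using A rm U pre by (simp add: emeasure_distr)
  also have "emeasure (lebR d) (U \<inter> (plane_rot d i j t -` A \<inter> space (lebR d)))
      = emeasure (distr (lebR d) (lebR d) (plane_rot d i j t)) (U \<inter> A)"
    unfolding U_pre using U A by (simp add: emeasure_distr measurable_plane_rot ij)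
  also have "\<dots> = emeasure (lebR d) (U \<inter> A)" by (simp add: distr_plane_rot_lebR[OF ij s])
  finally show "emeasure (distr (uniform_measure (lebR d) U) (lebR d) (plane_rot d i j t)) A
      = emeasure (uniform_measure (lebR d) U) A"
    using U A by simp
qed simp

definition sphere_proj :: "nat \<Rightarrow> (nat \<Rightarrow> real) \<Rightarrow> (nat \<Rightarrow> real)" where
  "sphere_proj d y = restrict (\<lambda>i. sqrt (real d) / sqrt (sqnorm d y) * y i) {..<d}"

lemma sphere_unif_eq_distr_sphere_proj:
  "sphere_unif d = distr (uniform_measure (lebR d) {y \<in> space (lebR d). sqnorm d y < 1}) (lebR d) (sphere_proj d)"
  unfolding sphere_unif_def sphere_proj_def by (rule refl)

lemma measurable_sphere_proj: "sphere_proj d \<in> measurable (lebR d) (lebR d)"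
proof -
  have "(\<lambda>y. restrict (\<lambda>i. sqrt (real d) / sqrt (sqnorm d y) * y i) {..<d})
      \<in> measurable (lebR d) (PiM {..<d} (\<lambda>_. lborel))"
  proof (rule measurable_restrict)
    fix k assume "k \<in> {..<d}"
    then show "(\<lambda>y. sqrt (real d) / sqrt (sqnorm d y) * y k) \<in> measurable (lebR d) lborel"
      using measurable_coord_lebR[of k d] by simp
  qed
  then show ?thesis unfolding sphere_proj_def by (simp add: lebR_def)
qed

lemma plane_rot_sphere_proj:
  assumes ij: "i < d" "j < d" "i \<noteq> j"
  shows "plane_rot d i j t (sphere_proj d y) = sphere_proj d (plane_rot d i j t y)"
  using ij unfolding sphere_proj_def sqnorm_plane_rot[OF ij]
  by (auto simp: plane_rot_def fun_eq_iff algebra_simps add_divide_distrib diff_divide_distrib)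

lemma distr_plane_rot_sphere_unif:
  assumes ij: "i < d" "j < d" "i \<noteq> j" and s: "sin t \<noteq> 0"
  shows "distr (sphere_unif d) (lebR d) (plane_rot d i j t) = sphere_unif d"
proof -
  define U where "U = uniform_measure (lebR d) {y \<in> space (lebR d). sqnorm d y < 1}"
  have rm: "plane_rot d i j t \<in> measurable U (lebR d)"
    using measurable_plane_rot[OF ij(1,2)] by (simp add: U_def measurable_cong_sets[OF sets_uniform_measure refl])
  have pm: "sphere_proj d \<in> measurable U (lebR d)"
    using measurable_sphere_proj by (simp add: U_def measurable_cong_sets[OF sets_uniform_measure refl])
  have "distr (sphere_unif d) (lebR d) (plane_rot d i j t) = distr U (lebR d) (plane_rot d i j t \<circ> sphere_proj d)"
    unfolding sphere_unif_eq_distr_sphere_proj U_def[symmetric]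
    by (rule distr_distr[OF measurable_plane_rot[OF ij(1,2)] pm])
  also have "plane_rot d i j t \<circ> sphere_proj d = sphere_proj d \<circ> plane_rot d i j t"
    using plane_rot_sphere_proj[OF ij] by (auto simp: fun_eq_iff)
  also have "distr U (lebR d) (sphere_proj d \<circ> plane_rot d i j t)
      = distr (distr U (lebR d) (plane_rot d i j t)) (lebR d) (sphere_proj d)"
    by (rule distr_distr[OF measurable_sphere_proj rm, symmetric])
  also have "distr U (lebR d) (plane_rot d i j t) = U"
    unfolding U_def by (rule distr_plane_rot_uniform_ball[OF ij s])
  finally show ?thesis by (simp add: sphere_unif_eq_distr_sphere_proj U_def)
qed

lemma emeasure_unit_ball_lebR:
  fixes d :: nat
  defines "U \<equiv> {y \<in> space (lebR d). sqnorm d y < 1}"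
  shows "emeasure (lebR d) U \<noteq> 0" "emeasure (lebR d) U \<noteq> \<infinity>"
proof -
  have U: "U \<in> sets (lebR d)" unfolding U_def by measurable
  have "U \<subseteq> PiE {..<d} (\<lambda>_. {-1..1::real})"
  proof
    fix y assume y: "y \<in> U"
    have "(y k)^2 \<le> sqnorm d y" if "k < d" for k
      unfolding sqnorm_def by (rule member_le_sum) (use that in auto)
    then have "\<bar>y k\<bar> < 1" if "k < d" for k
      using that y abs_square_less_1 by (fastforce simp: U_def)
    then show "y \<in> PiE {..<d} (\<lambda>_. {-1..1::real})"
      using y by (auto simp: U_def space_lebR PiE_def abs_less_iff less_imp_le)
  qed
  then have "emeasure (lebR d) U \<le> emeasure (lebR d) (PiE {..<d} (\<lambda>_. {-1..1::real}))"
    by (rule emeasure_mono) (simp add: lebR_def)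
  also have "\<dots> = (\<Prod>k\<in>{..<d}. emeasure lborel {-1..1::real})"
    unfolding lebR_def by (rule lborel_product.emeasure_PiM) auto
  also have "\<dots> < \<infinity>" by (simp add: less_top[symmetric] power_eq_top_ennreal)
  finally show "emeasure (lebR d) U \<noteq> \<infinity>" by simp
  define r where "r = 1 / (real d + 1)"
  have "PiE {..<d} (\<lambda>_. {-r..r}) \<subseteq> U"
  proof
    fix y assume y: "y \<in> PiE {..<d} (\<lambda>_. {-r..r})"
    have "(y k)^2 \<le> r^2" if "k < d" for k
      using y that power_mono[of "\<bar>y k\<bar>" r 2] by (auto simp: PiE_def Pi_def abs_le_iff)
    then have "sqnorm d y \<le> (\<Sum>k<d. r^2)" unfolding sqnorm_def by (intro sum_mono) auto
    also have "\<dots> = real d / (real d + 1)^2" by (simp add: r_def power_divide)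
    also have "\<dots> < 1" by (simp add: divide_less_eq power2_eq_square algebra_simps add_pos_nonneg)
    finally show "y \<in> U" using y by (auto simp: U_def space_lebR PiE_def)
  qed
  then have "emeasure (lebR d) (PiE {..<d} (\<lambda>_. {-r..r})) \<le> emeasure (lebR d) U"
    by (rule emeasure_mono[OF _ U])
  moreover have "emeasure (lebR d) (PiE {..<d} (\<lambda>_. {-r..r})) = (\<Prod>k\<in>{..<d}. emeasure lborel {-r..r})"
    unfolding lebR_def by (rule lborel_product.emeasure_PiM) auto
  moreover have "0 < (\<Prod>k\<in>{..<d}. emeasure lborel {-r..r})"
    by (simp add: r_def prod_pos, subst ennreal_power) auto
  ultimately show "emeasure (lebR d) U \<noteq> 0" by simp
qed

lemma prob_space_sphere_unif: "prob_space (sphere_unif d)"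
  unfolding sphere_unif_eq_distr_sphere_proj
  by (intro prob_space.prob_space_distr prob_space_uniform_measure emeasure_unit_ball_lebR)
     (simp add: measurable_cong_sets[OF sets_uniform_measure refl] measurable_sphere_proj)

lemma measurable_sphere_unif_iff: "measurable (sphere_unif d) N = measurable (lebR d) N"
  by (rule measurable_cong_sets) (simp_all add: sphere_unif_def)

definition on_sphere :: "nat \<Rightarrow> (nat \<Rightarrow> real) \<Rightarrow> bool" where
  "on_sphere d x \<longleftrightarrow> x \<in> space (lebR d) \<and> sqnorm d x = real d"

lemma on_sphere_plane_rot:
  "on_sphere d x \<Longrightarrow> i < d \<Longrightarrow> j < d \<Longrightarrow> i \<noteq> j \<Longrightarrow> on_sphere d (plane_rot d i j t x)"
  by (simp add: on_sphere_def sqnorm_plane_rot plane_rot_in_space)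

lemma AE_lebR_coord_nonzero:
  assumes "k < d" shows "AE y in lebR d. y k \<noteq> 0"
proof (rule AE_I')
  let ?N = "PiE {..<d} (\<lambda>l. if l = k then {0} else (UNIV::real set))"
  have "emeasure (lebR d) ?N = (\<Prod>l\<in>{..<d}. emeasure lborel (if l = k then {0} else (UNIV::real set)))"
    unfolding lebR_def by (rule lborel_product.emeasure_PiM) auto
  also have "\<dots> = 0"
    using assms by (intro prod_zero) (auto intro!: bexI[of _ k])
  finally show "?N \<in> null_sets (lebR d)"
    by (simp add: null_sets_def lebR_def)
  show "{y \<in> space (lebR d). \<not> y k \<noteq> 0} \<subseteq> ?N"
    using assms by (auto simp: space_lebR PiE_def Pi_def)
qed

lemma AE_on_sphere:
  assumes "0 < d" shows "AE x in sphere_unif d. on_sphere d x"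
proof -
  define U where "U = {y \<in> space (lebR d). sqnorm d y < 1}"
  have U: "U \<in> sets (lebR d)" unfolding U_def by measurable
  have pm: "sphere_proj d \<in> measurable (uniform_measure (lebR d) U) (lebR d)"
    using measurable_sphere_proj by (simp add: measurable_cong_sets[OF sets_uniform_measure refl])
  have "AE y in lebR d. on_sphere d (sphere_proj d y)"
    using AE_lebR_coord_nonzero[OF assms]
  proof eventually_elim
    case (elim y)
    have "0 < (y 0)^2" using elim by simp
    also have "(y 0)^2 \<le> sqnorm d y" unfolding sqnorm_def by (rule member_le_sum) (use assms in auto)
    finally have pos: "sqnorm d y > 0" .
    have "sqnorm d (sphere_proj d y) = (\<Sum>k<d. real d / sqnorm d y * (y k)^2)"
      unfolding sqnorm_def[of d "sphere_proj d y"] using pos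
      by (intro sum.cong) (simp_all add: sphere_proj_def power_mult_distrib power_divide)
    also have "\<dots> = real d" using pos by (simp add: sqnorm_def flip: sum_divide_distrib sum_distrib_left)
    finally show ?case by (simp add: on_sphere_def sphere_proj_def space_lebR)
  qed
  then have "AE y in uniform_measure (lebR d) U. on_sphere d (sphere_proj d y)"
    by (intro AE_uniform_measureI[OF U]) auto
  moreover have "{x \<in> space (lebR d). on_sphere d x} \<in> sets (lebR d)"
    unfolding on_sphere_def by measurable
  ultimately show ?thesis
    unfolding sphere_unif_eq_distr_sphere_proj U_def[symmetric] by (simp add: AE_distr_iff[OF pm])
qed

lemma integral_plane_rot_sphere_unif:
  fixes F :: "(nat \<Rightarrow> real) \<Rightarrow> real"
  assumes ij: "i < d" "j < d" "i \<noteq> j" and s: "sin t \<noteq> 0" and F: "F \<in> borel_measurable (lebR d)"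
  shows "(\<integral>x. F (plane_rot d i j t x) \<partial>sphere_unif d) = (\<integral>x. F x \<partial>sphere_unif d)"
proof -
  have "plane_rot d i j t \<in> measurable (sphere_unif d) (lebR d)"
    using measurable_plane_rot[OF ij(1,2)] by (simp add: measurable_sphere_unif_iff)
  from integral_distr[OF this F] show ?thesis
    by (simp add: distr_plane_rot_sphere_unif[OF ij s])
qed

lemma has_real_derivative_plane_rot_at:
  assumes ij: "i < d" "j < d" "i \<noteq> j"
    and D: "\<And>y. on_sphere d y \<Longrightarrow> ((\<lambda>t. F (plane_rot d i j t y)) has_real_derivative G y) (at 0)"
    and x: "on_sphere d x"
  shows "((\<lambda>t. F (plane_rot d i j t x)) has_real_derivative G (plane_rot d i j t0 x)) (at t0)"
proof -
  have "((\<lambda>t. F (plane_rot d i j t (plane_rot d i j t0 x))) has_real_derivative G (plane_rot d i j t0 x)) (at (t0 + - t0))"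
    using D[OF on_sphere_plane_rot[OF x ij]] by simp
  then have "((\<lambda>t. F (plane_rot d i j (t + - t0) (plane_rot d i j t0 x))) has_real_derivative G (plane_rot d i j t0 x)) (at t0)"
    by (subst (asm) DERIV_shift)
  then show ?thesis by (simp add: plane_rot_add[OF ij])
qed

lemma abs_diff_plane_rot_le:
  assumes ij: "i < d" "j < d" "i \<noteq> j"
    and D: "\<And>y. on_sphere d y \<Longrightarrow> ((\<lambda>t. F (plane_rot d i j t y)) has_real_derivative G y) (at 0)"
    and G_bound: "\<And>y. on_sphere d y \<Longrightarrow> \<bar>G y\<bar> \<le> MG" and x: "on_sphere d x"
  shows "\<bar>F (plane_rot d i j h x) - F x\<bar> \<le> MG * \<bar>h\<bar>"
proof -
  have "norm (F (plane_rot d i j h x) - F (plane_rot d i j 0 x)) \<le> MG * norm (h - 0)"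
    by (rule field_differentiable_bound[OF convex_UNIV])
      (auto intro: has_real_derivative_plane_rot_at[OF ij D x] G_bound on_sphere_plane_rot[OF x ij])
  then show ?thesis using x by (simp add: plane_rot_0 on_sphere_def)
qed

lemma sin_inverse_Suc_neq_0: "sin (inverse (real (Suc n))) \<noteq> 0"
proof -
  have "inverse (real (Suc n)) \<le> 1" by (simp add: inverse_le_1_iff)
  then have "inverse (real (Suc n)) < pi" using pi_gt3 by linarith
  then show ?thesis using sin_gt_zero[of "inverse (real (Suc n))"] by simp
qed

text \<open>
  The difference quotients in t integrate to zero by rotation invariance, and dominated
  convergence passes to the limit.
\<close>

lemma integral_plane_rot_derivative_eq_0:
  assumes ij: "i < d" "j < d" "i \<noteq> j"
    and F: "F \<in> borel_measurable (lebR d)" and G: "G \<in> borel_measurable (lebR d)"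
    and F_bound: "\<And>x. on_sphere d x \<Longrightarrow> \<bar>F x\<bar> \<le> MF" and G_bound: "\<And>x. on_sphere d x \<Longrightarrow> \<bar>G x\<bar> \<le> MG"
    and D: "\<And>x. on_sphere d x \<Longrightarrow> ((\<lambda>t. F (plane_rot d i j t x)) has_real_derivative G x) (at 0)"
  shows "(\<integral>x. G x \<partial>sphere_unif d) = 0"
proof -
  interpret S: prob_space "sphere_unif d" by (rule prob_space_sphere_unif)
  have AE: "AE x in sphere_unif d. on_sphere d x" using ij by (intro AE_on_sphere) auto
  have lipschitz: "\<bar>F (plane_rot d i j s x) - F x\<bar> \<le> MG * \<bar>s\<bar>" if "on_sphere d x" for x s
    using ij D G_bound that by (rule abs_diff_plane_rot_le)
  define h :: "nat \<Rightarrow> real" where "h n = inverse (real (Suc n))" for n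
  have h_pos: "h n > 0" for n by (simp add: h_def)
  have sin_h: "sin (h n) \<noteq> 0" for n
    unfolding h_def by (rule sin_inverse_Suc_neq_0)
  define quot where "quot n x = (F (plane_rot d i j (h n) x) - F x) / h n" for n x
  have F_rot: "(\<lambda>x. F (plane_rot d i j t x)) \<in> borel_measurable (sphere_unif d)" for t
    using measurable_comp[OF measurable_plane_rot[OF ij(1,2)] F] by (simp add: measurable_sphere_unif_iff comp_def)
  have "integrable (sphere_unif d) F"
    by (rule S.integrable_const_bound[where B=MF]) (use AE F_bound F in \<open>auto simp: measurable_sphere_unif_iff\<close>)
  moreover have "integrable (sphere_unif d) (\<lambda>x. F (plane_rot d i j t x))" for t
    by (rule S.integrable_const_bound[OF _ F_rot, where B=MF])
      (use AE in \<open>eventually_elim, simp add: F_bound on_sphere_plane_rot ij\<close>)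
  ultimately have quot_integral: "(\<integral>x. quot n x \<partial>sphere_unif d) = 0" for n
    unfolding quot_def by (simp add: integral_plane_rot_sphere_unif[OF ij sin_h F])
  have "(\<lambda>n. \<integral>x. quot n x \<partial>sphere_unif d) \<longlonglongrightarrow> (\<integral>x. G x \<partial>sphere_unif d)"
  proof (rule integral_dominated_convergence[where w="\<lambda>_. MG"])
    show "G \<in> borel_measurable (sphere_unif d)" using G by (simp add: measurable_sphere_unif_iff)
    show "quot n \<in> borel_measurable (sphere_unif d)" for n
      unfolding quot_def using F_rot[of "h n"] F by (simp add: measurable_sphere_unif_iff)
    show "AE x in sphere_unif d. (\<lambda>n. quot n x) \<longlonglongrightarrow> G x"
      using AE
    proof eventually_elim
      case (elim x)
      have "((\<lambda>s. (F (plane_rot d i j (0 + s) x) - F (plane_rot d i j 0 x)) / s) \<longlongrightarrow> G x) (at 0)"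
        using D[OF elim] unfolding DERIV_def .
      then have "((\<lambda>s. (F (plane_rot d i j s x) - F x) / s) \<longlongrightarrow> G x) (at 0)"
        using elim by (simp add: plane_rot_0 on_sphere_def)
      note seq_limit = LIMSEQ_SEQ_conv[THEN iffD2, OF this, rule_format]
      have "h \<longlonglongrightarrow> 0" unfolding h_def[abs_def] by (rule LIMSEQ_inverse_real_of_nat)
      moreover have "\<forall>n. h n \<noteq> 0" using h_pos by (metis less_irrefl)
      ultimately show ?case
        unfolding quot_def by (intro seq_limit) auto
    qed
    show "AE x in sphere_unif d. norm (quot n x) \<le> MG" for n
      using AE
    proof eventually_elim
      case (elim x)
      then show ?case
        using lipschitz[OF elim, of "h n"] h_pos[of n] by (simp add: quot_def abs_divide divide_le_eq)
    qed
  qed simp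
  then show ?thesis by (simp add: quot_integral LIMSEQ_const_iff)
qed

section \<open>Derivatives of quadratic forms along plane rotations\<close>

definition matvec :: "nat \<Rightarrow> (nat \<Rightarrow> nat \<Rightarrow> real) \<Rightarrow> (nat \<Rightarrow> real) \<Rightarrow> nat \<Rightarrow> real" where
  "matvec d M x k = (\<Sum>l<d. M k l * x l)"

definition qform_rot_deriv :: "nat \<Rightarrow> (nat \<Rightarrow> nat \<Rightarrow> real) \<Rightarrow> nat \<Rightarrow> nat \<Rightarrow> (nat \<Rightarrow> real) \<Rightarrow> real" where
  "qform_rot_deriv d M i j x = 2 * (x i * matvec d M x j - x j * matvec d M x i)"

definition qform_rot_deriv2 :: "nat \<Rightarrow> (nat \<Rightarrow> nat \<Rightarrow> real) \<Rightarrow> nat \<Rightarrow> nat \<Rightarrow> (nat \<Rightarrow> real) \<Rightarrow> real" where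
  "qform_rot_deriv2 d M i j x = 2 * (M j j * (x i)^2 + M i i * (x j)^2 - 2 * M i j * x i * x j
      - x i * matvec d M x i - x j * matvec d M x j)"

definition matvec_inner :: "nat \<Rightarrow> (nat \<Rightarrow> nat \<Rightarrow> real) \<Rightarrow> (nat \<Rightarrow> nat \<Rightarrow> real) \<Rightarrow> (nat \<Rightarrow> real) \<Rightarrow> real" where
  "matvec_inner d A B x = (\<Sum>k<d. matvec d A x k * matvec d B x k)"

definition mat_trace :: "nat \<Rightarrow> (nat \<Rightarrow> nat \<Rightarrow> real) \<Rightarrow> real" where
  "mat_trace d M = (\<Sum>k<d. M k k)"

definition rot_generator :: "nat \<Rightarrow> nat \<Rightarrow> (nat \<Rightarrow> real) \<Rightarrow> nat \<Rightarrow> real" where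
  "rot_generator i j x k = (if k = i then - x j else if k = j then x i else 0)"

lemma qform_eq_matvec: "qform d M x = (\<Sum>k<d. x k * matvec d M x k)"
  by (simp add: qform_def matvec_def sum_distrib_left mult.assoc)

lemma matvec_rot_generator:
  assumes "i < d" "j < d" "i \<noteq> j"
  shows "matvec d M (rot_generator i j x) k = - M k i * x j + M k j * x i"
proof -
  have "matvec d M (rot_generator i j x) k = (\<Sum>l<d. (if l = i then - M k i * x j else 0) + (if l = j then M k j * x i else 0))"
    unfolding matvec_def rot_generator_def by (intro sum.cong) (use assms in auto)
  also have "\<dots> = - M k i * x j + M k j * x i"
    using assms by (simp add: sum.distrib)
  finally show ?thesis .
qed

lemma plane_rot_0_apply: "k < d \<Longrightarrow> plane_rot d i j 0 x k = x k"
  by (simp add: plane_rot_def)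

lemma has_real_derivative_plane_rot_coord:
  assumes "k < d"
  shows "((\<lambda>t. plane_rot d i j t x k) has_real_derivative rot_generator i j x k) (at 0)"
proof -
  consider "k = i" | "k \<noteq> i" "k = j" | "k \<noteq> i" "k \<noteq> j" by blast
  then show ?thesis
  proof cases
    case 1
    have "((\<lambda>t. cos t * x i - sin t * x j) has_real_derivative - x j) (at 0)"
      by (rule derivative_eq_intros refl | simp)+
    then show ?thesis using 1 assms by (simp add: plane_rot_def rot_generator_def)
  next
    case 2
    have "((\<lambda>t. sin t * x i + cos t * x j) has_real_derivative x i) (at 0)"
      by (rule derivative_eq_intros refl | simp)+
    then show ?thesis using 2 assms by (simp add: plane_rot_def rot_generator_def)
  next
    case 3
    then show ?thesis using assms by (simp add: plane_rot_def rot_generator_def)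
  qed
qed

lemma has_real_derivative_matvec_plane_rot:
  "((\<lambda>t. matvec d M (plane_rot d i j t x) k) has_real_derivative matvec d M (rot_generator i j x) k) (at 0)"
  unfolding matvec_def
  by (intro DERIV_sum DERIV_cmult has_real_derivative_plane_rot_coord) auto

lemma has_real_derivative_qform_plane_rot:
  assumes ij: "i < d" "j < d" "i \<noteq> j" and sym: "symmetric_mat d M"
  shows "((\<lambda>t. qform d M (plane_rot d i j t x)) has_real_derivative qform_rot_deriv d M i j x) (at 0)"
proof -
  have "((\<lambda>t. \<Sum>k<d. plane_rot d i j t x k * matvec d M (plane_rot d i j t x) k) has_real_derivative
        (\<Sum>k<d. rot_generator i j x k * matvec d M (plane_rot d i j 0 x) k + matvec d M (rot_generator i j x) k * plane_rot d i j 0 x k)) (at 0)"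
    by (intro DERIV_sum DERIV_mult has_real_derivative_plane_rot_coord has_real_derivative_matvec_plane_rot) auto
  moreover have "matvec d M (plane_rot d i j 0 x) k = matvec d M x k" for k
    unfolding matvec_def by (intro sum.cong) (auto simp: plane_rot_0_apply)
  moreover have "(\<Sum>k<d. rot_generator i j x k * matvec d M x k + matvec d M (rot_generator i j x) k * plane_rot d i j 0 x k) = qform_rot_deriv d M i j x"
  proof -
    have "(\<Sum>k<d. matvec d M (rot_generator i j x) k * plane_rot d i j 0 x k) = (\<Sum>k<d. (- M k i * x j + M k j * x i) * x k)"
      using ij by (intro sum.cong) (auto simp: matvec_rot_generator plane_rot_0_apply)
    also have "\<dots> = (\<Sum>k<d. (- x j) * (M i k * x k) + x i * (M j k * x k))"
    proof (intro sum.cong refl)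
      fix k assume k: "k \<in> {..<d}"
      have "M k i = M i k" "M k j = M j k" using sym ij k unfolding symmetric_mat_def by auto
      then show "(- M k i * x j + M k j * x i) * x k = (- x j) * (M i k * x k) + x i * (M j k * x k)"
        by (simp add: algebra_simps)
    qed
    also have "\<dots> = - x j * (\<Sum>k<d. M i k * x k) + x i * (\<Sum>k<d. M j k * x k)"
      by (simp only: sum.distrib sum_distrib_left)
    also have "\<dots> = - x j * matvec d M x i + x i * matvec d M x j" by (simp add: matvec_def)
    finally have e1: "(\<Sum>k<d. matvec d M (rot_generator i j x) k * plane_rot d i j 0 x k) = - x j * matvec d M x i + x i * matvec d M x j" .
    have "(\<Sum>k<d. rot_generator i j x k * matvec d M x k) = (\<Sum>k<d. (if k = i then - x j * matvec d M x i else 0) + (if k = j then x i * matvec d M x j else 0))"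
      using ij by (intro sum.cong) (auto simp: rot_generator_def)
    also have "\<dots> = - x j * matvec d M x i + x i * matvec d M x j" using ij by (simp add: sum.distrib)
    finally have e2: "(\<Sum>k<d. rot_generator i j x k * matvec d M x k) = - x j * matvec d M x i + x i * matvec d M x j" .
    show ?thesis using e1 e2 by (simp add: sum.distrib qform_rot_deriv_def algebra_simps)
  qed
  ultimately show ?thesis by (simp add: qform_eq_matvec)
qed

lemma has_real_derivative_qform_rot_deriv:
  assumes ij: "i < d" "j < d" "i \<noteq> j" and sym: "symmetric_mat d M"
  shows "((\<lambda>t. qform_rot_deriv d M i j (plane_rot d i j t x)) has_real_derivative qform_rot_deriv2 d M i j x) (at 0)"
proof -
  have "((\<lambda>t. 2 * (plane_rot d i j t x i * matvec d M (plane_rot d i j t x) j - plane_rot d i j t x j * matvec d M (plane_rot d i j t x) i))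
      has_real_derivative 2 * ((rot_generator i j x i * matvec d M (plane_rot d i j 0 x) j + matvec d M (rot_generator i j x) j * plane_rot d i j 0 x i)
          - (rot_generator i j x j * matvec d M (plane_rot d i j 0 x) i + matvec d M (rot_generator i j x) i * plane_rot d i j 0 x j))) (at 0)"
    using ij by (intro DERIV_cmult DERIV_diff DERIV_mult has_real_derivative_plane_rot_coord has_real_derivative_matvec_plane_rot) auto
  moreover have "matvec d M (plane_rot d i j 0 x) k = matvec d M x k" for k
    unfolding matvec_def by (intro sum.cong) (auto simp: plane_rot_0_apply)
  moreover have "2 * ((rot_generator i j x i * matvec d M x j + matvec d M (rot_generator i j x) j * plane_rot d i j 0 x i)
          - (rot_generator i j x j * matvec d M x i + matvec d M (rot_generator i j x) i * plane_rot d i j 0 x j)) = qform_rot_deriv2 d M i j x"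
    using ij sym unfolding symmetric_mat_def
    by (simp add: matvec_rot_generator plane_rot_0_apply rot_generator_def qform_rot_deriv2_def power2_eq_square algebra_simps)
  ultimately show ?thesis by (simp add: qform_rot_deriv_def)
qed

lemma sum_off_diagonal:
  fixes d :: nat shows "(\<Sum>i<d. \<Sum>j\<in>{..<d} - {i}. f i j) = (\<Sum>i<d. \<Sum>j<d. f i j) - (\<Sum>i<d. f i i :: real)"
proof -
  have "(\<Sum>j<d. f i j) = f i i + (\<Sum>j\<in>{..<d} - {i}. f i j)" if "i < d" for i
    using that sum.remove[of "{..<d}" i "f i"] by simp
  then have "(\<Sum>i<d. \<Sum>j<d. f i j) = (\<Sum>i<d. f i i + (\<Sum>j\<in>{..<d} - {i}. f i j))"
    by (intro sum.cong) auto
  then show ?thesis by (simp add: sum.distrib)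
qed

lemma sum_qform_rot_deriv2:
  "(\<Sum>i<d. \<Sum>j\<in>{..<d} - {i}. qform_rot_deriv2 d B i j x) = 4 * mat_trace d B * sqnorm d x - 4 * real d * qform d B x"
proof -
  let ?m = "matvec d B x"
  have p1: "(\<Sum>i<d. \<Sum>j<d. B j j * (x i)^2) = mat_trace d B * sqnorm d x"
    by (subst sum.swap) (simp add: mat_trace_def sqnorm_def sum_product)
  have p2: "(\<Sum>i<d. \<Sum>j<d. B i i * (x j)^2) = mat_trace d B * sqnorm d x"
    by (simp add: mat_trace_def sqnorm_def sum_product)
  have p3: "(\<Sum>i<d. \<Sum>j<d. B i j * x i * x j) = qform d B x"
    by (simp add: qform_def mult.commute mult.left_commute)
  have p4: "(\<Sum>i<d. \<Sum>j<d. x i * ?m i) = real d * qform d B x"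
    by (simp add: qform_eq_matvec sum_distrib_left)
  have p5: "(\<Sum>i<d. \<Sum>j<d. x j * ?m j) = real d * qform d B x"
    by (simp add: qform_eq_matvec)
  have full: "(\<Sum>i<d. \<Sum>j<d. qform_rot_deriv2 d B i j x) = 2 * ((\<Sum>i<d. \<Sum>j<d. B j j * (x i)^2) + (\<Sum>i<d. \<Sum>j<d. B i i * (x j)^2)
      - 2 * (\<Sum>i<d. \<Sum>j<d. B i j * x i * x j) - (\<Sum>i<d. \<Sum>j<d. x i * ?m i) - (\<Sum>i<d. \<Sum>j<d. x j * ?m j))"
    by (simp add: qform_rot_deriv2_def sum.distrib sum_subtractf sum_distrib_left mult.assoc)
  have diag: "(\<Sum>i<d. qform_rot_deriv2 d B i i x) = - 4 * qform d B x"
    by (simp add: qform_rot_deriv2_def qform_eq_matvec sum_distrib_left power2_eq_square algebra_simps)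
  show ?thesis unfolding sum_off_diagonal full diag p1 p2 p3 p4 p5 by (simp add: algebra_simps)
qed

lemma sum_qform_rot_deriv_mult:
  "(\<Sum>i<d. \<Sum>j\<in>{..<d} - {i}. qform_rot_deriv d A i j x * qform_rot_deriv d B i j x)
     = 8 * (sqnorm d x * matvec_inner d A B x - qform d A x * qform d B x)"
proof -
  let ?a = "matvec d A x" and ?b = "matvec d B x"
  have p1: "(\<Sum>i<d. \<Sum>j<d. (x i)^2 * (?a j * ?b j)) = sqnorm d x * matvec_inner d A B x"
    by (simp add: matvec_inner_def sqnorm_def sum_product)
  have p2: "(\<Sum>i<d. \<Sum>j<d. (x i * ?b i) * (x j * ?a j)) = qform d B x * qform d A x"
    by (simp add: qform_eq_matvec sum_product)
  have p3: "(\<Sum>i<d. \<Sum>j<d. (x i * ?a i) * (x j * ?b j)) = qform d A x * qform d B x"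
    by (simp add: qform_eq_matvec sum_product)
  have p4: "(\<Sum>i<d. \<Sum>j<d. (?a i * ?b i) * (x j)^2) = matvec_inner d A B x * sqnorm d x"
    by (simp add: matvec_inner_def sqnorm_def sum_product)
  have e: "qform_rot_deriv d A i j x * qform_rot_deriv d B i j x = 4 * ((x i)^2 * (?a j * ?b j) - (x i * ?b i) * (x j * ?a j)
      - (x i * ?a i) * (x j * ?b j) + (?a i * ?b i) * (x j)^2)" for i j
    by (simp add: qform_rot_deriv_def power2_eq_square algebra_simps)
  have full: "(\<Sum>i<d. \<Sum>j<d. qform_rot_deriv d A i j x * qform_rot_deriv d B i j x) = 4 * ((\<Sum>i<d. \<Sum>j<d. (x i)^2 * (?a j * ?b j))
      - (\<Sum>i<d. \<Sum>j<d. (x i * ?b i) * (x j * ?a j)) - (\<Sum>i<d. \<Sum>j<d. (x i * ?a i) * (x j * ?b j))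
      + (\<Sum>i<d. \<Sum>j<d. (?a i * ?b i) * (x j)^2))"
    unfolding e by (simp add: sum.distrib sum_subtractf sum_distrib_left)
  have diag: "(\<Sum>i<d. qform_rot_deriv d A i i x * qform_rot_deriv d B i i x) = 0"
    by (simp add: qform_rot_deriv_def)
  show ?thesis unfolding sum_off_diagonal full diag p1 p2 p3 p4 by (simp add: algebra_simps)
qed

lemma sum_rot_deriv_terms:
  assumes "sqnorm d x = real d"
  shows "(\<Sum>i<d. \<Sum>j\<in>{..<d} - {i}. a * qform_rot_deriv d A i j x * qform_rot_deriv d B i j x
      + b * qform_rot_deriv2 d B i j x)
    = 8 * (a * (real d * matvec_inner d A B x - qform d A x * qform d B x))
      + 4 * mat_trace d B * real d * b - 4 * real d * (b * qform d B x)"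
proof -
  have "(\<Sum>i<d. \<Sum>j\<in>{..<d} - {i}. a * qform_rot_deriv d A i j x * qform_rot_deriv d B i j x
      + b * qform_rot_deriv2 d B i j x)
    = a * (\<Sum>i<d. \<Sum>j\<in>{..<d} - {i}. qform_rot_deriv d A i j x * qform_rot_deriv d B i j x)
      + b * (\<Sum>i<d. \<Sum>j\<in>{..<d} - {i}. qform_rot_deriv2 d B i j x)"
    by (simp add: sum.distrib sum_distrib_left mult.assoc)
  then show ?thesis
    unfolding sum_qform_rot_deriv2 sum_qform_rot_deriv_mult assms by (simp add: algebra_simps)
qed

section \<open>A Stein identity for quadratic forms on the sphere\<close>

definition sphere_bounded :: "nat \<Rightarrow> ((nat \<Rightarrow> real) \<Rightarrow> real) \<Rightarrow> bool" where
  "sphere_bounded d f \<longleftrightarrow> f \<in> borel_measurable (lebR d) \<and> (\<exists>C. \<forall>x. on_sphere d x \<longrightarrow> \<bar>f x\<bar> \<le> C)"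

lemma integrable_sphere_bounded:
  assumes "0 < d" "sphere_bounded d f"
  shows "integrable (sphere_unif d) f"
proof -
  interpret S: prob_space "sphere_unif d" by (rule prob_space_sphere_unif)
  obtain C where C: "\<forall>x. on_sphere d x \<longrightarrow> \<bar>f x\<bar> \<le> C" and f: "f \<in> borel_measurable (lebR d)"
    using assms(2) by (auto simp: sphere_bounded_def)
  have "AE x in sphere_unif d. norm (f x) \<le> C"
    using AE_on_sphere[OF assms(1)] by eventually_elim (use C in auto)
  then show ?thesis by (rule S.integrable_const_bound) (use f in \<open>simp add: measurable_sphere_unif_iff\<close>)
qed

lemma sphere_bounded_const: "sphere_bounded d (\<lambda>_. c)"
  by (auto simp: sphere_bounded_def)

lemma sphere_bounded_coord:
  assumes "k < d" shows "sphere_bounded d (\<lambda>x. x k)"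
proof -
  have "\<bar>x k\<bar> \<le> sqrt (real d)" if "on_sphere d x" for x
  proof -
    have "(x k)^2 \<le> sqnorm d x" unfolding sqnorm_def by (rule member_le_sum) (use assms in auto)
    then show ?thesis using that real_le_rsqrt[of "\<bar>x k\<bar>"] by (simp add: on_sphere_def)
  qed
  then show ?thesis using measurable_coord_lebR[OF assms] by (auto simp: sphere_bounded_def)
qed

lemma sphere_bounded_add: "sphere_bounded d f \<Longrightarrow> sphere_bounded d g \<Longrightarrow> sphere_bounded d (\<lambda>x. f x + g x)"
  unfolding sphere_bounded_def
proof (elim conjE exE, intro conjI)
  fix C D assume "\<forall>x. on_sphere d x \<longrightarrow> \<bar>f x\<bar> \<le> C" "\<forall>x. on_sphere d x \<longrightarrow> \<bar>g x\<bar> \<le> D"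
  then show "\<exists>C. \<forall>x. on_sphere d x \<longrightarrow> \<bar>f x + g x\<bar> \<le> C"
    by (intro exI[of _ "C + D"]) (smt (verit))
qed auto

lemma sphere_bounded_diff: "sphere_bounded d f \<Longrightarrow> sphere_bounded d g \<Longrightarrow> sphere_bounded d (\<lambda>x. f x - g x)"
  unfolding sphere_bounded_def
proof (elim conjE exE, intro conjI)
  fix C D assume "\<forall>x. on_sphere d x \<longrightarrow> \<bar>f x\<bar> \<le> C" "\<forall>x. on_sphere d x \<longrightarrow> \<bar>g x\<bar> \<le> D"
  then show "\<exists>C. \<forall>x. on_sphere d x \<longrightarrow> \<bar>f x - g x\<bar> \<le> C"
    by (intro exI[of _ "C + D"]) (smt (verit))
qed auto

lemma sphere_bounded_mult: "sphere_bounded d f \<Longrightarrow> sphere_bounded d g \<Longrightarrow> sphere_bounded d (\<lambda>x. f x * g x)"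
  unfolding sphere_bounded_def
proof (elim conjE exE, intro conjI)
  fix C D assume C: "\<forall>x. on_sphere d x \<longrightarrow> \<bar>f x\<bar> \<le> C" and D: "\<forall>x. on_sphere d x \<longrightarrow> \<bar>g x\<bar> \<le> D"
  show "\<exists>C. \<forall>x. on_sphere d x \<longrightarrow> \<bar>f x * g x\<bar> \<le> C"
  proof (intro exI[of _ "C * D"] allI impI)
    fix x assume "on_sphere d x"
    then have "\<bar>f x\<bar> \<le> C" "\<bar>g x\<bar> \<le> D" using C D by auto
    then show "\<bar>f x * g x\<bar> \<le> C * D" unfolding abs_mult by (intro mult_mono) auto
  qed
qed auto

lemma sphere_bounded_sum:
  "finite S \<Longrightarrow> (\<And>k. k \<in> S \<Longrightarrow> sphere_bounded d (f k)) \<Longrightarrow> sphere_bounded d (\<lambda>x. \<Sum>k\<in>S. f k x)"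
  by (induction S rule: finite_induct) (simp_all add: sphere_bounded_const sphere_bounded_add)

lemma sphere_bounded_comp:
  assumes p: "continuous_on UNIV p" and growth: "\<And>t. \<bar>p t\<bar> \<le> a + b * \<bar>t\<bar>" and "b \<ge> 0"
    and f: "sphere_bounded d f"
  shows "sphere_bounded d (\<lambda>x. p (f x))"
  using f unfolding sphere_bounded_def
proof (elim conjE exE, intro conjI)
  fix C assume C: "\<forall>x. on_sphere d x \<longrightarrow> \<bar>f x\<bar> \<le> C"
  show "\<exists>C. \<forall>x. on_sphere d x \<longrightarrow> \<bar>p (f x)\<bar> \<le> C"
  proof (intro exI[of _ "a + b * C"] allI impI)
    fix x assume "on_sphere d x"
    then have "b * \<bar>f x\<bar> \<le> b * C" using C \<open>b \<ge> 0\<close> by (intro mult_left_mono) auto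
    then show "\<bar>p (f x)\<bar> \<le> a + b * C" using growth[of "f x"] by linarith
  qed
next
  assume "f \<in> borel_measurable (lebR d)"
  then show "(\<lambda>x. p (f x)) \<in> borel_measurable (lebR d)"
    using measurable_comp[OF _ borel_measurable_continuous_onI[OF p]] by (simp add: comp_def)
qed

lemma sphere_bounded_abs: "sphere_bounded d f \<Longrightarrow> sphere_bounded d (\<lambda>x. \<bar>f x\<bar>)"
  by (rule sphere_bounded_comp[where a=0 and b=1]) (auto intro: continuous_intros)

lemma sphere_bounded_comp_deriv:
  assumes p: "\<And>t. (p has_real_derivative p' t) (at t)" and p': "\<And>t. \<bar>p' t\<bar> \<le> L"
    and f: "sphere_bounded d f"
  shows "sphere_bounded d (\<lambda>x. p (f x))"
proof (rule sphere_bounded_comp[OF _ _ _ f])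
  show "continuous_on UNIV p"
    using p by (intro continuous_at_imp_continuous_on ballI DERIV_isCont) auto
  show "L \<ge> 0" using p'[of 0] by simp
  fix t
  have "norm (p t - p 0) \<le> L * norm (t - 0)"
    by (rule field_differentiable_bound[OF convex_UNIV]) (use p p' in auto)
  then show "\<bar>p t\<bar> \<le> \<bar>p 0\<bar> + L * \<bar>t\<bar>" by simp
qed

lemma sphere_bounded_matvec: "sphere_bounded d (\<lambda>x. matvec d M x k)"
  unfolding matvec_def by (intro sphere_bounded_sum sphere_bounded_mult sphere_bounded_const sphere_bounded_coord) auto

lemma sphere_bounded_qform: "sphere_bounded d (qform d M)"
  unfolding qform_eq_matvec[abs_def]
  by (intro sphere_bounded_sum sphere_bounded_mult sphere_bounded_matvec sphere_bounded_coord) auto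

lemma sphere_bounded_qform_rot_deriv: "i < d \<Longrightarrow> j < d \<Longrightarrow> sphere_bounded d (qform_rot_deriv d M i j)"
  unfolding qform_rot_deriv_def[abs_def]
  by (intro sphere_bounded_mult sphere_bounded_diff sphere_bounded_const sphere_bounded_coord sphere_bounded_matvec)

lemma sphere_bounded_qform_rot_deriv2: "i < d \<Longrightarrow> j < d \<Longrightarrow> sphere_bounded d (qform_rot_deriv2 d M i j)"
  unfolding qform_rot_deriv2_def[abs_def] power2_eq_square
  by (intro sphere_bounded_mult sphere_bounded_diff sphere_bounded_add sphere_bounded_const
      sphere_bounded_coord sphere_bounded_matvec)

lemma sphere_bounded_matvec_inner: "sphere_bounded d (matvec_inner d A B)"
  unfolding matvec_inner_def[abs_def] by (intro sphere_bounded_sum sphere_bounded_mult sphere_bounded_matvec) auto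

lemma integral_rot_deriv_term_eq_0:
  assumes ij: "i < d" "j < d" "i \<noteq> j" and A: "symmetric_mat d A" and B: "symmetric_mat d B"
    and p: "\<And>t. (p has_real_derivative p' t) (at t)" and p'_cont: "continuous_on UNIV p'"
    and p'_bound: "\<And>t. \<bar>p' t\<bar> \<le> L"
  shows "(\<integral>x. p' (qform d A x) * qform_rot_deriv d A i j x * qform_rot_deriv d B i j x
      + p (qform d A x) * qform_rot_deriv2 d B i j x \<partial>sphere_unif d) = 0"
proof -
  define F where "F x = p (qform d A x) * qform_rot_deriv d B i j x" for x
  define G where "G x = p' (qform d A x) * qform_rot_deriv d A i j x * qform_rot_deriv d B i j x
      + p (qform d A x) * qform_rot_deriv2 d B i j x" for x
  have p_qA: "sphere_bounded d (\<lambda>x. p (qform d A x))"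
    by (rule sphere_bounded_comp_deriv[OF p p'_bound sphere_bounded_qform])
  have p'_qA: "sphere_bounded d (\<lambda>x. p' (qform d A x))"
    by (rule sphere_bounded_comp[OF p'_cont, of L 0]) (use p'_bound sphere_bounded_qform in auto)
  have "sphere_bounded d F"
    unfolding F_def[abs_def] using ij by (intro sphere_bounded_mult p_qA sphere_bounded_qform_rot_deriv)
  then obtain MF where F: "F \<in> borel_measurable (lebR d)" "\<And>x. on_sphere d x \<Longrightarrow> \<bar>F x\<bar> \<le> MF"
    by (auto simp: sphere_bounded_def)
  have "sphere_bounded d G"
    unfolding G_def[abs_def] using ij
    by (intro sphere_bounded_add sphere_bounded_mult p_qA p'_qA sphere_bounded_qform_rot_deriv
        sphere_bounded_qform_rot_deriv2)
  then obtain MG where G: "G \<in> borel_measurable (lebR d)" "\<And>x. on_sphere d x \<Longrightarrow> \<bar>G x\<bar> \<le> MG"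
    by (auto simp: sphere_bounded_def)
  have "((\<lambda>t. F (plane_rot d i j t x)) has_real_derivative G x) (at 0)" if "on_sphere d x" for x
  proof -
    have x: "plane_rot d i j 0 x = x" using that by (simp add: plane_rot_0 on_sphere_def)
    have "((\<lambda>t. p (qform d A (plane_rot d i j t x))) has_real_derivative
        p' (qform d A x) * qform_rot_deriv d A i j x) (at 0)"
      using DERIV_chain2[OF p has_real_derivative_qform_plane_rot[OF ij A, where x=x]] by (simp add: x)
    from DERIV_mult[OF this has_real_derivative_qform_rot_deriv[OF ij B, where x=x]] show ?thesis
      by (simp add: x F_def G_def mult.commute)
  qed
  from integral_plane_rot_derivative_eq_0[OF ij F(1) G(1) F(2) G(2) this] show ?thesis
    by (simp add: G_def)
qed

theorem sphere_stein_identity: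
  assumes d: "2 \<le> d" and A: "symmetric_mat d A" and B: "symmetric_mat d B"
    and p: "\<And>t. (p has_real_derivative p' t) (at t)" and p'_cont: "continuous_on UNIV p'"
    and p'_bound: "\<And>t. \<bar>p' t\<bar> \<le> L"
  shows "(\<integral>x. p (qform d A x) * qform d B x \<partial>sphere_unif d)
    = mat_trace d B * (\<integral>x. p (qform d A x) \<partial>sphere_unif d)
      + (2 / real d) * (\<integral>x. p' (qform d A x) * (real d * matvec_inner d A B x - qform d A x * qform d B x) \<partial>sphere_unif d)"
proof -
  let ?S = "sphere_unif d"
  have d0: "0 < d" using d by simp
  have p_qA: "sphere_bounded d (\<lambda>x. p (qform d A x))"
    by (rule sphere_bounded_comp_deriv[OF p p'_bound sphere_bounded_qform])
  have p'_qA: "sphere_bounded d (\<lambda>x. p' (qform d A x))"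
    by (rule sphere_bounded_comp[OF p'_cont, of L 0]) (use p'_bound sphere_bounded_qform in auto)
  define G where "G i j x = p' (qform d A x) * qform_rot_deriv d A i j x * qform_rot_deriv d B i j x
      + p (qform d A x) * qform_rot_deriv2 d B i j x" for i j x
  have G: "sphere_bounded d (G i j)" if "i < d" "j < d" for i j
    unfolding G_def using that
    by (intro sphere_bounded_add sphere_bounded_mult p_qA p'_qA sphere_bounded_qform_rot_deriv
        sphere_bounded_qform_rot_deriv2)
  define E1 where "E1 = (\<integral>x. p' (qform d A x) * (real d * matvec_inner d A B x - qform d A x * qform d B x) \<partial>?S)"
  define E2 where "E2 = (\<integral>x. p (qform d A x) \<partial>?S)"
  define E3 where "E3 = (\<integral>x. p (qform d A x) * qform d B x \<partial>?S)"
  have "(\<integral>x. (\<Sum>i<d. \<Sum>j\<in>{..<d} - {i}. G i j x) \<partial>?S) = (\<Sum>i<d. \<integral>x. (\<Sum>j\<in>{..<d} - {i}. G i j x) \<partial>?S)"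
    by (rule Bochner_Integration.integral_sum) (auto intro!: integrable_sphere_bounded[OF d0] sphere_bounded_sum G)
  also have "\<dots> = (\<Sum>i<d. \<Sum>j\<in>{..<d} - {i}. \<integral>x. G i j x \<partial>?S)"
    by (intro sum.cong refl Bochner_Integration.integral_sum) (auto intro!: integrable_sphere_bounded[OF d0] G)
  also have "\<dots> = 0"
    unfolding G_def by (intro sum.neutral ballI integral_rot_deriv_term_eq_0[OF _ _ _ A B p p'_cont p'_bound]) auto
  finally have "0 = (\<integral>x. (\<Sum>i<d. \<Sum>j\<in>{..<d} - {i}. G i j x) \<partial>?S)" ..
  also have "\<dots> = (\<integral>x. 8 * (p' (qform d A x) * (real d * matvec_inner d A B x - qform d A x * qform d B x))
     + (4 * mat_trace d B * real d) * p (qform d A x) - (4 * real d) * (p (qform d A x) * qform d B x) \<partial>?S)"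
  proof (rule integral_cong_AE)
    show "AE x in ?S. (\<Sum>i<d. \<Sum>j\<in>{..<d} - {i}. G i j x)
      = 8 * (p' (qform d A x) * (real d * matvec_inner d A B x - qform d A x * qform d B x))
        + (4 * mat_trace d B * real d) * p (qform d A x) - (4 * real d) * (p (qform d A x) * qform d B x)"
      using AE_on_sphere[OF d0]
    by eventually_elim (simp add: G_def on_sphere_def sum_rot_deriv_terms)
  qed (use G in \<open>auto intro!: borel_measurable_integrable integrable_sphere_bounded[OF d0]
      sphere_bounded_sum sphere_bounded_add sphere_bounded_diff sphere_bounded_mult sphere_bounded_const
      p_qA p'_qA sphere_bounded_matvec_inner sphere_bounded_qform\<close>)
  also have "\<dots> = 8 * E1 + (4 * mat_trace d B * real d) * E2 - (4 * real d) * E3"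
    unfolding E1_def E2_def E3_def
    by (simp add: integrable_sphere_bounded[OF d0] sphere_bounded_mult sphere_bounded_diff
        sphere_bounded_const p_qA p'_qA sphere_bounded_matvec_inner sphere_bounded_qform)
  finally show ?thesis
    unfolding E1_def[symmetric] E2_def[symmetric] E3_def[symmetric] using d0 by (simp add: field_simps)
qed

section \<open>Matrix norms\<close>

definition frob_inner :: "nat \<Rightarrow> (nat \<Rightarrow> nat \<Rightarrow> real) \<Rightarrow> (nat \<Rightarrow> nat \<Rightarrow> real) \<Rightarrow> real" where
  "frob_inner d A B = (\<Sum>k<d. \<Sum>l<d. A k l * B k l)"

definition symmetrize :: "(nat \<Rightarrow> nat \<Rightarrow> real) \<Rightarrow> nat \<Rightarrow> nat \<Rightarrow> real" where
  "symmetrize N k l = (N k l + N l k) / 2"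

definition transpose_mult :: "nat \<Rightarrow> (nat \<Rightarrow> nat \<Rightarrow> real) \<Rightarrow> (nat \<Rightarrow> nat \<Rightarrow> real) \<Rightarrow> nat \<Rightarrow> nat \<Rightarrow> real" where
  "transpose_mult d A B l m = (\<Sum>k<d. A k l * B k m)"

lemma symmetric_mat_symmetrize: "symmetric_mat d (symmetrize N)"
  by (simp add: symmetric_mat_def symmetrize_def add.commute)

lemma qform_symmetrize: "qform d (symmetrize N) x = qform d N x"
proof -
  have "qform d (symmetrize N) x = (qform d N x + (\<Sum>k<d. \<Sum>l<d. x k * N l k * x l)) / 2"
    by (simp add: qform_def symmetrize_def sum_divide_distrib sum.distrib algebra_simps add_divide_distrib)
  also have "(\<Sum>k<d. \<Sum>l<d. x k * N l k * x l) = qform d N x"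
    unfolding qform_def by (subst sum.swap) (simp add: mult.commute mult.left_commute)
  finally show ?thesis by simp
qed

lemma mat_trace_symmetrize: "mat_trace d (symmetrize N) = mat_trace d N"
  by (simp add: mat_trace_def symmetrize_def)

lemma matvec_inner_eq_qform: "matvec_inner d A B x = qform d (transpose_mult d A B) x"
proof -
  have "matvec_inner d A B x = (\<Sum>k<d. \<Sum>l<d. \<Sum>m<d. (A k l * x l) * (B k m * x m))"
    by (simp add: matvec_inner_def matvec_def sum_product)
  also have "\<dots> = (\<Sum>l<d. \<Sum>k<d. \<Sum>m<d. (A k l * x l) * (B k m * x m))"
    by (rule sum.swap)
  also have "\<dots> = (\<Sum>l<d. \<Sum>m<d. \<Sum>k<d. (A k l * x l) * (B k m * x m))"
    by (intro sum.cong refl sum.swap)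
  also have "\<dots> = qform d (transpose_mult d A B) x"
    unfolding qform_def
    by (intro sum.cong refl) (simp add: transpose_mult_def sum_distrib_left sum_distrib_right algebra_simps)
  finally show ?thesis .
qed

lemma mat_trace_transpose_mult: "mat_trace d (transpose_mult d A B) = frob_inner d A B"
  unfolding mat_trace_def frob_inner_def transpose_mult_def by (rule sum.swap)

lemma frob_inner_self_nonneg: "0 \<le> frob_inner d A A"
  by (simp add: frob_inner_def sum_nonneg)

lemma sum_matvec_sq_le_frob:
  assumes "sqnorm d x \<le> 1"
  shows "(\<Sum>i<d. (\<Sum>j<d. A i j * x j)^2) \<le> frob_inner d A A"
proof -
  have "(\<Sum>j<d. A i j * x j)^2 \<le> (\<Sum>j<d. (A i j)^2)" for i
  proof -
    have "(\<Sum>j<d. A i j * x j)^2 \<le> (\<Sum>j<d. (A i j)^2) * (\<Sum>j<d. (x j)^2)"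
      by (rule Cauchy_Schwarz_ineq_sum)
    also have "\<dots> \<le> (\<Sum>j<d. (A i j)^2) * 1"
      using assms by (intro mult_left_mono) (auto simp: sqnorm_def sum_nonneg)
    finally show ?thesis by simp
  qed
  then have "(\<Sum>i<d. (\<Sum>j<d. A i j * x j)^2) \<le> (\<Sum>i<d. \<Sum>j<d. (A i j)^2)"
    by (intro sum_mono) auto
  then show ?thesis by (simp add: frob_inner_def power2_eq_square)
qed

lemma bdd_above_opnorm: "bdd_above {sqrt (\<Sum>i<d. (\<Sum>j<d. A i j * x j)^2) | x. sqnorm d x \<le> 1}"
  by (rule bdd_aboveI[where M="sqrt (frob_inner d A A)"]) (auto intro: sum_matvec_sq_le_frob)

lemma opnorm_upper: "sqnorm d x \<le> 1 \<Longrightarrow> sqrt (\<Sum>i<d. (\<Sum>j<d. A i j * x j)^2) \<le> opnorm d A"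
  unfolding opnorm_def by (rule cSup_upper[OF _ bdd_above_opnorm]) auto

lemma opnorm_nonneg: "0 \<le> opnorm d A"
  using opnorm_upper[of d "\<lambda>_. 0" A] by (simp add: sqnorm_def)

lemma opnorm_le_frob: "opnorm d A \<le> sqrt (frob_inner d A A)"
  unfolding opnorm_def
proof (rule cSup_least)
  show "{sqrt (\<Sum>i<d. (\<Sum>j<d. A i j * x j)^2) | x. sqnorm d x \<le> 1} \<noteq> {}"
    by (auto intro!: exI[of _ "\<lambda>_. 0"] simp: sqnorm_def)
  fix y assume "y \<in> {sqrt (\<Sum>i<d. (\<Sum>j<d. A i j * x j)^2) | x. sqnorm d x \<le> 1}"
  then obtain x where "sqnorm d x \<le> 1" "y = sqrt (\<Sum>i<d. (\<Sum>j<d. A i j * x j)^2)" by blast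
  then show "y \<le> sqrt (frob_inner d A A)" using real_sqrt_le_mono[OF sum_matvec_sq_le_frob] by blast
qed

lemma sum_matvec_sq_le_opnorm: "(\<Sum>i<d. (\<Sum>j<d. A i j * v j)^2) \<le> (opnorm d A)^2 * sqnorm d v"
proof (cases "sqnorm d v = 0")
  case True
  then have "v j = 0" if "j < d" for j
    using that unfolding sqnorm_def by (subst (asm) sum_nonneg_eq_0_iff) auto
  then show ?thesis by (simp add: True)
next
  case False
  then have s: "0 < sqnorm d v" by (simp add: sqnorm_def sum_nonneg order_le_neq_trans)
  define w where "w j = v j / sqrt (sqnorm d v)" for j
  have "sqnorm d w = 1"
    using s by (simp add: sqnorm_def w_def power_divide flip: sum_divide_distrib)
  then have "(\<Sum>i<d. (\<Sum>j<d. A i j * w j)^2) \<le> (opnorm d A)^2"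
    by (intro sqrt_le_D opnorm_upper) simp
  moreover have "(\<Sum>i<d. (\<Sum>j<d. A i j * w j)^2) = (\<Sum>i<d. (\<Sum>j<d. A i j * v j)^2) / sqnorm d v"
    using s by (simp add: w_def power_divide flip: sum_divide_distrib)
  ultimately show ?thesis using s by (simp add: divide_le_eq mult.commute)
qed

lemma abs_qform_le_opnorm: "\<bar>qform d A x\<bar> \<le> opnorm d A * sqnorm d x"
proof -
  have "(qform d A x)^2 = (\<Sum>k<d. x k * matvec d A x k)^2" by (simp add: qform_eq_matvec)
  also have "\<dots> \<le> (\<Sum>k<d. (x k)^2) * (\<Sum>k<d. (matvec d A x k)^2)" by (rule Cauchy_Schwarz_ineq_sum)
  also have "(\<Sum>k<d. (matvec d A x k)^2) \<le> (opnorm d A)^2 * sqnorm d x"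
    unfolding matvec_def by (rule sum_matvec_sq_le_opnorm)
  also have "(\<Sum>k<d. (x k)^2) * ((opnorm d A)^2 * sqnorm d x) = (opnorm d A * sqnorm d x)^2"
    by (simp add: sqnorm_def power2_eq_square)
  finally have "\<bar>qform d A x\<bar>^2 \<le> (opnorm d A * sqnorm d x)^2"
    by (simp add: sqnorm_def sum_nonneg mult_left_mono)
  then show ?thesis
    by (rule power2_le_imp_le) (simp add: opnorm_nonneg sqnorm_def sum_nonneg)
qed

lemma frob_transpose_mult_le:
  assumes sA: "symmetric_mat d A"
  shows "frob_inner d (transpose_mult d A B) (transpose_mult d A B) \<le> (opnorm d A)^2 * frob_inner d B B"
proof -
  have col: "(\<Sum>l<d. (\<Sum>k<d. A k l * B k m)^2) \<le> (opnorm d A)^2 * (\<Sum>k<d. (B k m)^2)" for m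
  proof -
    have "(\<Sum>l<d. (\<Sum>k<d. A k l * B k m)^2) = (\<Sum>l<d. (\<Sum>k<d. A l k * B k m)^2)"
      using sA unfolding symmetric_mat_def by (intro sum.cong refl) (auto intro!: arg_cong[where f="\<lambda>t. t^2"] sum.cong)
    also have "\<dots> \<le> (opnorm d A)^2 * sqnorm d (\<lambda>k. B k m)" by (rule sum_matvec_sq_le_opnorm)
    finally show ?thesis by (simp add: sqnorm_def)
  qed
  have "frob_inner d (transpose_mult d A B) (transpose_mult d A B) = (\<Sum>m<d. \<Sum>l<d. (\<Sum>k<d. A k l * B k m)^2)"
    unfolding frob_inner_def by (subst sum.swap) (simp add: transpose_mult_def power2_eq_square)
  also have "\<dots> \<le> (\<Sum>m<d. (opnorm d A)^2 * (\<Sum>k<d. (B k m)^2))" by (intro sum_mono col)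
  also have "\<dots> = (opnorm d A)^2 * frob_inner d B B"
  proof -
    have "frob_inner d B B = (\<Sum>l<d. \<Sum>k<d. (B k l)^2)"
      unfolding frob_inner_def by (subst sum.swap) (simp add: power2_eq_square)
    then show ?thesis by (simp add: sum_distrib_left)
  qed
  finally show ?thesis .
qed

lemma frob_symmetrize_le: "frob_inner d (symmetrize N) (symmetrize N) \<le> frob_inner d N N"
proof -
  have "frob_inner d (symmetrize N) (symmetrize N) \<le> (\<Sum>k<d. \<Sum>l<d. ((N k l)^2 + (N l k)^2) / 2)"
    unfolding frob_inner_def symmetrize_def
  proof (intro sum_mono)
    fix k l
    have "0 \<le> (N k l - N l k)^2" by simp
    then show "(N k l + N l k) / 2 * ((N k l + N l k) / 2) \<le> ((N k l)^2 + (N l k)^2) / 2"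
      by (simp add: power2_eq_square field_simps)
  qed
  also have "\<dots> = (frob_inner d N N + (\<Sum>k<d. \<Sum>l<d. (N l k)^2)) / 2"
    by (simp add: frob_inner_def sum.distrib sum_divide_distrib power2_eq_square add_divide_distrib)
  also have "(\<Sum>k<d. \<Sum>l<d. (N l k)^2) = frob_inner d N N"
    unfolding frob_inner_def by (subst sum.swap) (simp add: power2_eq_square)
  finally show ?thesis by simp
qed

section \<open>Moments of quadratic forms\<close>

lemma integral_qform:
  assumes d: "2 \<le> d"
  shows "(\<integral>x. qform d N x \<partial>sphere_unif d) = mat_trace d N"
proof -
  interpret S: prob_space "sphere_unif d" by (rule prob_space_sphere_unif)
  have "(\<integral>x. 1 * qform d (symmetrize N) x \<partial>sphere_unif d)
    = mat_trace d (symmetrize N) * (\<integral>x. 1 \<partial>sphere_unif d)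
      + (2 / real d) * (\<integral>x. 0 * (real d * matvec_inner d (symmetrize N) (symmetrize N) x
          - qform d (symmetrize N) x * qform d (symmetrize N) x) \<partial>sphere_unif d)"
    by (rule sphere_stein_identity[OF d symmetric_mat_symmetrize symmetric_mat_symmetrize,
          where p="\<lambda>_. 1" and p'="\<lambda>_. 0" and L=0]) auto
  then show ?thesis by (simp add: qform_symmetrize mat_trace_symmetrize S.prob_space)
qed

lemma integral_qform_mult:
  assumes d: "2 \<le> d" and A: "symmetric_mat d A" and B: "symmetric_mat d B" and B_trace: "mat_trace d B = 0"
  shows "(\<integral>x. qform d A x * qform d B x \<partial>sphere_unif d) = (2 * real d / (real d + 2)) * frob_inner d A B"
proof -
  have d0: "0 < d" using d by simp
  define X where "X = (\<integral>x. qform d A x * qform d B x \<partial>sphere_unif d)"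
  have "X = mat_trace d B * (\<integral>x. qform d A x \<partial>sphere_unif d)
      + (2 / real d) * (\<integral>x. 1 * (real d * matvec_inner d A B x - qform d A x * qform d B x) \<partial>sphere_unif d)"
    unfolding X_def
    by (rule sphere_stein_identity[OF d A B, where p="\<lambda>t. t" and p'="\<lambda>_. 1" and L=1])
      (auto intro: DERIV_ident)
  also have "(\<integral>x. 1 * (real d * matvec_inner d A B x - qform d A x * qform d B x) \<partial>sphere_unif d)
      = real d * frob_inner d A B - X"
    unfolding X_def
    by (simp add: integrable_sphere_bounded[OF d0] sphere_bounded_matvec_inner sphere_bounded_mult
        sphere_bounded_qform matvec_inner_eq_qform integral_qform[OF d] mat_trace_transpose_mult)
  finally have "X * (real d + 2) = 2 * real d * frob_inner d A B"
    using d0 B_trace by (simp add: field_simps)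
  then show ?thesis using d0 by (simp add: X_def field_simps)
qed

section \<open>Degree 2 spherical harmonics\<close>

lemma sph_harm2_symmetric: "sph_harm2 d A \<Longrightarrow> symmetric_mat d A"
  by (simp add: sph_harm2_def)

lemma sph_harm2_mat_trace:
  assumes "2 \<le> d" "sph_harm2 d A"
  shows "mat_trace d A = 0"
  using assms integral_qform[of d A] by (simp add: sph_harm2_def)

lemma sph_harm2_frob_inner:
  assumes d: "2 \<le> d" and A: "sph_harm2 d A"
  shows "frob_inner d A A = (real d + 2) / (2 * real d)"
proof -
  have "1 = (\<integral>x. qform d A x * qform d A x \<partial>sphere_unif d)"
    using A by (simp add: sph_harm2_def power2_eq_square)
  also have "\<dots> = (2 * real d / (real d + 2)) * frob_inner d A A"
    using d A by (intro integral_qform_mult sph_harm2_symmetric sph_harm2_mat_trace)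
  finally show ?thesis using d by (simp add: field_simps)
qed

lemma sph_harm2_frob_inner_le_1:
  assumes "2 \<le> d" "sph_harm2 d A"
  shows "frob_inner d A A \<le> 1"
  using assms by (simp add: sph_harm2_frob_inner divide_le_eq)

lemma sph_harm2_opnorm_le_1:
  assumes "2 \<le> d" "sph_harm2 d A"
  shows "opnorm d A \<le> 1"
  using opnorm_le_frob[of d A] sph_harm2_frob_inner_le_1[OF assms] by (simp add: order_trans)

lemma orth_harm2_frob_inner:
  assumes d: "2 \<le> d" and A: "sph_harm2 d A" and B: "sph_harm2 d B" and AB: "orth_harm2 d A B"
  shows "frob_inner d A B = 0"
proof -
  have "0 = (\<integral>x. qform d A x * qform d B x \<partial>sphere_unif d)" using AB by (simp add: orth_harm2_def)
  also have "\<dots> = (2 * real d / (real d + 2)) * frob_inner d A B"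
    using d A B by (intro integral_qform_mult sph_harm2_symmetric sph_harm2_mat_trace)
  finally show ?thesis using d by simp
qed

text \<open>
  For d = 0 every quadratic form vanishes, and for d = 1 it is constant on the sphere, so it
  cannot have mean 0 and second moment 1.
\<close>

lemma sph_harm2_dim_ge_2:
  assumes B: "sph_harm2 d B" shows "2 \<le> d"
proof (rule ccontr)
  assume "\<not> 2 \<le> d"
  then consider "d = 0" | "d = 1" by linarith
  then show False
  proof cases
    case 1
    then show False using B by (simp add: sph_harm2_def qform_def)
  next
    case 2
    have q: "qform 1 B x = B 0 0 * (x 0)^2" for x by (simp add: qform_def power2_eq_square)
    have "AE x in sphere_unif 1. qform 1 B x = B 0 0"
      using AE_on_sphere[OF zero_less_one]
    proof eventually_elim
      case (elim x)
      then have "(x 0)^2 = 1" by (simp add: on_sphere_def sqnorm_def)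
      then show ?case by (simp only: q)
    qed
    then have "(\<integral>x. qform 1 B x \<partial>sphere_unif 1) = B 0 0"
      using sphere_bounded_qform[of 1 B]
      by (subst integral_cong_AE[where g="\<lambda>_. B 0 0"])
        (simp_all add: sphere_bounded_def measurable_sphere_unif_iff
          prob_space.prob_space[OF prob_space_sphere_unif])
    then have "B 0 0 = 0" using B 2 by (simp add: sph_harm2_def)
    then show False using B 2 by (simp add: sph_harm2_def qform_def)
  qed
qed

lemma (in prob_space) expectation_abs_le:
  fixes f :: "'a \<Rightarrow> real"
  assumes "integrable M f" "integrable M (\<lambda>x. (f x)^2)" "expectation (\<lambda>x. (f x)^2) \<le> c^2" "0 \<le> c"
  shows "expectation (\<lambda>x. \<bar>f x\<bar>) \<le> c"
proof -
  have "variance (\<lambda>x. \<bar>f x\<bar>) = expectation (\<lambda>x. (f x)^2) - (expectation (\<lambda>x. \<bar>f x\<bar>))^2"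
    using assms by (subst variance_eq) auto
  then have "(expectation (\<lambda>x. \<bar>f x\<bar>))^2 \<le> c^2"
    using variance_positive[of "\<lambda>x. \<bar>f x\<bar>"] assms(3) by linarith
  then show ?thesis using assms(4) by (rule power2_le_imp_le)
qed

lemma integral_abs_sph_harm2_le_1:
  assumes "2 \<le> d" "sph_harm2 d B"
  shows "(\<integral>x. \<bar>qform d B x\<bar> \<partial>sphere_unif d) \<le> 1"
proof -
  interpret S: prob_space "sphere_unif d" by (rule prob_space_sphere_unif)
  have "sphere_bounded d (\<lambda>x. (qform d B x)^2)"
    unfolding power2_eq_square by (intro sphere_bounded_mult sphere_bounded_qform)
  then show ?thesis
    using assms by (intro S.expectation_abs_le integrable_sphere_bounded sphere_bounded_qform)
      (auto simp: sph_harm2_def)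
qed

text \<open>
  The form <Ax, Bx> is the quadratic form of the symmetrization of transpose(A) B, which is
  traceless by orthogonality; so its second moment is given by its Frobenius norm.
\<close>

lemma integral_abs_matvec_inner_le:
  assumes d: "2 \<le> d" and A: "sph_harm2 d A" and B: "sph_harm2 d B" and AB: "orth_harm2 d A B"
  shows "(\<integral>x. \<bar>matvec_inner d A B x\<bar> \<partial>sphere_unif d) \<le> 3 / 2 * opnorm d A"
proof -
  interpret S: prob_space "sphere_unif d" by (rule prob_space_sphere_unif)
  have d0: "0 < d" using d by simp
  define M where "M = symmetrize (transpose_mult d A B)"
  have M_qform: "matvec_inner d A B x = qform d M x" for x
    by (simp add: M_def qform_symmetrize matvec_inner_eq_qform)
  have M_trace: "mat_trace d M = 0"
    using orth_harm2_frob_inner[OF d A B AB] by (simp add: M_def mat_trace_symmetrize mat_trace_transpose_mult)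
  have "frob_inner d M M \<le> frob_inner d (transpose_mult d A B) (transpose_mult d A B)"
    unfolding M_def by (rule frob_symmetrize_le)
  also have "\<dots> \<le> (opnorm d A)^2 * frob_inner d B B"
    using A by (intro frob_transpose_mult_le sph_harm2_symmetric)
  also have "\<dots> \<le> (opnorm d A)^2"
    using sph_harm2_frob_inner_le_1[OF d B] by (simp add: mult_left_le)
  finally have M_frob: "frob_inner d M M \<le> (opnorm d A)^2" .
  have "(\<integral>x. (qform d M x)^2 \<partial>sphere_unif d) = (2 * real d / (real d + 2)) * frob_inner d M M"
    unfolding power2_eq_square
    by (rule integral_qform_mult[OF d _ _ M_trace]) (simp_all add: M_def symmetric_mat_symmetrize)
  also have "\<dots> \<le> 2 * frob_inner d M M"
    using frob_inner_self_nonneg[of d M] by (intro mult_right_mono) (auto simp: field_simps)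
  also have "\<dots> \<le> 2 * (opnorm d A)^2"
    using M_frob by simp
  also have "\<dots> \<le> (3 / 2 * opnorm d A)^2"
    unfolding power_mult_distrib by (intro mult_right_mono) (simp_all add: power2_eq_square)
  finally show ?thesis
    unfolding M_qform using opnorm_nonneg[of d A]
    by (intro S.expectation_abs_le integrable_sphere_bounded[OF d0] sphere_bounded_qform)
      (simp_all add: power2_eq_square sphere_bounded_mult sphere_bounded_qform)
qed

section \<open>Lipschitz test functions\<close>

lemma abs_stein_remainder_le:
  assumes x: "on_sphere d x" and b: "\<bar>b\<bar> \<le> L"
  shows "\<bar>b * (real d * matvec_inner d A B x - qform d A x * qform d B x)\<bar>
    \<le> L * real d * \<bar>matvec_inner d A B x\<bar> + L * opnorm d A * real d * \<bar>qform d B x\<bar>"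
proof -
  have "\<bar>qform d A x\<bar> \<le> opnorm d A * real d"
    using abs_qform_le_opnorm[of d A x] x by (simp add: on_sphere_def)
  then have "\<bar>qform d A x\<bar> * \<bar>qform d B x\<bar> \<le> opnorm d A * real d * \<bar>qform d B x\<bar>"
    by (rule mult_right_mono) simp
  then have "\<bar>real d * matvec_inner d A B x - qform d A x * qform d B x\<bar>
      \<le> real d * \<bar>matvec_inner d A B x\<bar> + opnorm d A * real d * \<bar>qform d B x\<bar>"
    using abs_triangle_ineq4[of "real d * matvec_inner d A B x" "qform d A x * qform d B x"]
    by (simp add: abs_mult)
  then have "\<bar>b * (real d * matvec_inner d A B x - qform d A x * qform d B x)\<bar>
      \<le> L * (real d * \<bar>matvec_inner d A B x\<bar> + opnorm d A * real d * \<bar>qform d B x\<bar>)"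
    unfolding abs_mult using b by (intro mult_mono) auto
  then show ?thesis by (simp add: algebra_simps)
qed

theorem abs_integral_smooth_qform_le:
  assumes d: "2 \<le> d" and A: "sph_harm2 d A" and B: "sph_harm2 d B" and AB: "orth_harm2 d A B"
    and p: "\<And>t. (p has_real_derivative p' t) (at t)" and p'_cont: "continuous_on UNIV p'"
    and p'_bound: "\<And>t. \<bar>p' t\<bar> \<le> L"
  shows "\<bar>\<integral>x. p (qform d A x) * qform d B x \<partial>sphere_unif d\<bar> \<le> 5 * L * opnorm d A"
proof -
  let ?S = "sphere_unif d" and ?op = "opnorm d A"
  have d0: "0 < d" using d by simp
  have L: "0 \<le> L" using p'_bound[of 0] by simp
  let ?R = "\<lambda>x. p' (qform d A x) * (real d * matvec_inner d A B x - qform d A x * qform d B x)"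
  have stein: "(\<integral>x. p (qform d A x) * qform d B x \<partial>?S) = (2 / real d) * (\<integral>x. ?R x \<partial>?S)"
    using sphere_stein_identity[OF d sph_harm2_symmetric[OF A] sph_harm2_symmetric[OF B] p p'_cont p'_bound]
    by (simp add: sph_harm2_mat_trace[OF d B])
  have R_bound: "AE x in ?S. \<bar>?R x\<bar> \<le> L * real d * \<bar>matvec_inner d A B x\<bar> + L * ?op * real d * \<bar>qform d B x\<bar>"
    using AE_on_sphere[OF d0] by eventually_elim (rule abs_stein_remainder_le[OF _ p'_bound])
  have integrable: "integrable ?S (\<lambda>x. \<bar>matvec_inner d A B x\<bar>)" "integrable ?S (\<lambda>x. \<bar>qform d B x\<bar>)"
    by (simp_all add: integrable_sphere_bounded[OF d0] sphere_bounded_abs sphere_bounded_matvec_inner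
        sphere_bounded_qform)
  have R_integrable: "integrable ?S ?R"
    by (intro integrable_sphere_bounded[OF d0] sphere_bounded_mult sphere_bounded_diff sphere_bounded_const
        sphere_bounded_comp[OF p'_cont, of L 0] sphere_bounded_matvec_inner sphere_bounded_qform)
      (use p'_bound in auto)
  have "\<bar>\<integral>x. ?R x \<partial>?S\<bar> \<le> (\<integral>x. \<bar>?R x\<bar> \<partial>?S)"
    by (rule integral_abs_bound)
  also have "\<dots> \<le> (\<integral>x. L * real d * \<bar>matvec_inner d A B x\<bar> + L * ?op * real d * \<bar>qform d B x\<bar> \<partial>?S)"
    by (rule integral_mono_AE) (use R_integrable integrable R_bound in auto)
  also have "\<dots> = L * real d * (\<integral>x. \<bar>matvec_inner d A B x\<bar> \<partial>?S) + L * ?op * real d * (\<integral>x. \<bar>qform d B x\<bar> \<partial>?S)"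
    using integrable by simp
  also have "\<dots> \<le> L * real d * (3 / 2 * ?op) + L * ?op * real d * 1"
    using integral_abs_matvec_inner_le[OF d A B AB] integral_abs_sph_harm2_le_1[OF d B] L opnorm_nonneg[of d A]
    by (intro add_mono mult_left_mono) auto
  finally have R: "\<bar>\<integral>x. ?R x \<partial>?S\<bar> \<le> 5 / 2 * L * real d * ?op"
    by (simp add: algebra_simps)
  have "\<bar>\<integral>x. p (qform d A x) * qform d B x \<partial>?S\<bar> = 2 / real d * \<bar>\<integral>x. ?R x \<partial>?S\<bar>"
    unfolding stein by (simp add: abs_mult)
  also have "\<dots> \<le> 2 / real d * (5 / 2 * L * real d * ?op)"
    using R by (intro mult_left_mono) auto
  also have "\<dots> = 5 * L * ?op" using d0 by simp
  finally show ?thesis .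
qed

lemma lipschitz_smooth_approx:
  fixes q :: "real \<Rightarrow> real"
  assumes q: "L-lipschitz_on UNIV q" and \<epsilon>: "0 < \<epsilon>"
  obtains p p' where "\<And>t. (p has_real_derivative p' t) (at t)" "continuous_on UNIV p'"
    "\<And>t. \<bar>p' t\<bar> \<le> L" "\<And>t. \<bar>q t - p t\<bar> \<le> L * \<epsilon>"
proof -
  have q_cont: "continuous_on UNIV q" using q by (rule lipschitz_on_continuous_on)
  have q_lip: "\<bar>q s - q t\<bar> \<le> L * \<bar>s - t\<bar>" for s t
    using lipschitz_onD[OF q, of s t] by (simp add: dist_real_def)
  have "\<exists>Q. \<forall>x :: real. -\<infinity> < x \<longrightarrow> x < \<infinity> \<longrightarrow> (Q has_vector_derivative q x) (at x)"
    by (rule einterval_antiderivative) (use q_cont in \<open>auto simp: continuous_on_eq_continuous_at\<close>)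
  then obtain Q where Q: "\<And>x. (Q has_real_derivative q x) (at x)"
    by (auto simp: has_real_derivative_iff_has_vector_derivative)
  define p where "p t = (Q (t + \<epsilon>) - Q t) / \<epsilon>" for t
  define p' where "p' t = (q (t + \<epsilon>) - q t) / \<epsilon>" for t
  show thesis
  proof (rule that)
    fix t
    have "((\<lambda>x. Q (x + \<epsilon>)) has_real_derivative q (t + \<epsilon>)) (at t)"
      using Q[of "t + \<epsilon>"] by (subst (asm) DERIV_shift)
    from DERIV_cdivide[OF DERIV_diff[OF this Q], of \<epsilon>]
    show "(p has_real_derivative p' t) (at t)" by (simp add: p_def[abs_def] p'_def)
    show "\<bar>p' t\<bar> \<le> L"
      using q_lip[of "t + \<epsilon>" t] \<epsilon> by (simp add: p'_def abs_divide divide_le_eq)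
    obtain z where z: "t < z" "z < t + \<epsilon>" "Q (t + \<epsilon>) - Q t = (t + \<epsilon> - t) * q z"
      using MVT2[of t "t + \<epsilon>" Q q] Q \<epsilon> by auto
    then have "\<bar>q t - p t\<bar> = \<bar>q z - q t\<bar>" using \<epsilon> by (simp add: p_def)
    also have "\<dots> \<le> L * \<bar>z - t\<bar>" by (rule q_lip)
    also have "\<dots> \<le> L * \<epsilon>" using z lipschitz_on_nonneg[OF q] by (intro mult_left_mono) auto
    finally show "\<bar>q t - p t\<bar> \<le> L * \<epsilon>" .
  next
    have "continuous_on UNIV (\<lambda>t. q (t + \<epsilon>))"
      by (rule continuous_on_compose2[OF q_cont]) (auto intro: continuous_intros)
    then show "continuous_on UNIV p'" unfolding p'_def[abs_def] using q_cont \<epsilon> by (intro continuous_intros) auto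
  qed
qed

theorem abs_integral_lipschitz_qform_le:
  assumes d: "2 \<le> d" and A: "sph_harm2 d A" and B: "sph_harm2 d B" and AB: "orth_harm2 d A B"
    and q: "L-lipschitz_on UNIV q"
  shows "\<bar>\<integral>x. q (qform d A x) * qform d B x \<partial>sphere_unif d\<bar> \<le> 5 * L * opnorm d A"
proof (rule field_le_epsilon)
  let ?S = "sphere_unif d"
  have d0: "0 < d" using d by simp
  have L: "0 \<le> L" using q by (rule lipschitz_on_nonneg)
  fix e :: real assume e: "0 < e"
  define \<epsilon> where "\<epsilon> = e / (L + 1)"
  have \<epsilon>: "0 < \<epsilon>" "L * \<epsilon> \<le> e" using e L by (simp_all add: \<epsilon>_def field_simps)
  obtain p p' where p: "\<And>t. (p has_real_derivative p' t) (at t)" and p'_cont: "continuous_on UNIV p'"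
    and p'_bound: "\<And>t. \<bar>p' t\<bar> \<le> L" and close: "\<And>t. \<bar>q t - p t\<bar> \<le> L * \<epsilon>"
    using lipschitz_smooth_approx[OF q \<epsilon>(1)] by blast
  have "\<bar>q t\<bar> \<le> \<bar>q 0\<bar> + L * \<bar>t\<bar>" for t
    using lipschitz_onD[OF q, of t 0] abs_triangle_ineq[of "q t - q 0" "q 0"] by (simp add: dist_real_def)
  then have q_qA: "sphere_bounded d (\<lambda>x. q (qform d A x))"
    by (rule sphere_bounded_comp[OF lipschitz_on_continuous_on[OF q] _ L sphere_bounded_qform])
  have p_qA: "sphere_bounded d (\<lambda>x. p (qform d A x))"
    by (rule sphere_bounded_comp_deriv[OF p p'_bound sphere_bounded_qform])
  have "\<bar>(\<integral>x. q (qform d A x) * qform d B x \<partial>?S) - (\<integral>x. p (qform d A x) * qform d B x \<partial>?S)\<bar>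
      = \<bar>\<integral>x. (q (qform d A x) - p (qform d A x)) * qform d B x \<partial>?S\<bar>"
    by (simp add: left_diff_distrib integrable_sphere_bounded[OF d0] sphere_bounded_mult q_qA p_qA
        sphere_bounded_qform)
  also have "\<dots> \<le> (\<integral>x. L * \<epsilon> * \<bar>qform d B x\<bar> \<partial>?S)"
  proof (rule order_trans[OF integral_abs_bound integral_mono])
    show "integrable ?S (\<lambda>x. \<bar>(q (qform d A x) - p (qform d A x)) * qform d B x\<bar>)"
      "integrable ?S (\<lambda>x. L * \<epsilon> * \<bar>qform d B x\<bar>)"
      by (intro integrable_sphere_bounded[OF d0] sphere_bounded_abs sphere_bounded_mult sphere_bounded_diff
          sphere_bounded_const q_qA p_qA sphere_bounded_qform)+
    show "\<bar>(q (qform d A x) - p (qform d A x)) * qform d B x\<bar> \<le> L * \<epsilon> * \<bar>qform d B x\<bar>" for x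
      unfolding abs_mult by (intro mult_right_mono close) simp
  qed
  also have "\<dots> = L * \<epsilon> * (\<integral>x. \<bar>qform d B x\<bar> \<partial>?S)" by simp
  also have "\<dots> \<le> L * \<epsilon>"
    using integral_abs_sph_harm2_le_1[OF d B] L \<epsilon>(1) by (simp add: mult_left_le)
  finally show "\<bar>\<integral>x. q (qform d A x) * qform d B x \<partial>?S\<bar> \<le> 5 * L * opnorm d A + e"
    using abs_integral_smooth_qform_le[OF d A B AB p p'_cont p'_bound] \<epsilon>(2) by linarith
qed

lemma half_le_sqrt_mult:
  fixes a b :: real
  assumes "0 \<le> a" "a \<le> 1" "1 / 2 \<le> b"
  shows "a / 2 \<le> sqrt (a * b)"
proof (rule real_le_rsqrt)
  have "(a / 2)^2 \<le> a * (1 / 2)"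
    using assms mult_left_le[of a a] by (simp add: power2_eq_square field_simps)
  also have "\<dots> \<le> a * b" using assms by (intro mult_left_mono) auto
  finally show "(a / 2)^2 \<le> a * b" .
qed

lemma ln_ge_half:
  assumes "2 \<le> x" shows "1 / 2 \<le> ln (x :: real)"
proof -
  have "1 / 2 \<le> ln (2 :: real)" using ln_diff_le[of 1 2] by simp
  also have "\<dots> \<le> ln x" using assms by simp
  finally show ?thesis .
qed

theorem lemma25:
  shows "\<exists>C::real. \<forall>(d::nat) (A::nat \<Rightarrow> nat \<Rightarrow> real) (B::nat \<Rightarrow> nat \<Rightarrow> real)
            (q::real \<Rightarrow> real) (L::real).
     L-lipschitz_on UNIV q \<and> \<bar>q 0\<bar> \<le> L \<and>
     sph_harm2 d A \<and> sph_harm2 d B \<and> orth_harm2 d A B \<longrightarrow>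
     \<bar>\<integral>x. q (qform d A x) * qform d B x \<partial>sphere_unif d\<bar>
       \<le> C * L * (sqrt (opnorm d A * ln (real d)) + opnorm d B * ln (real d))"
proof (intro exI[of _ 10] allI impI, elim conjE)
  fix d :: nat and A B :: "nat \<Rightarrow> nat \<Rightarrow> real" and q :: "real \<Rightarrow> real" and L :: real
  assume q: "L-lipschitz_on UNIV q" and A: "sph_harm2 d A" and B: "sph_harm2 d B"
    and AB: "orth_harm2 d A B"
  have d: "2 \<le> d" by (rule sph_harm2_dim_ge_2[OF B])
  have ln_d: "1 / 2 \<le> ln (real d)" using d by (intro ln_ge_half) simp
  have "\<bar>\<integral>x. q (qform d A x) * qform d B x \<partial>sphere_unif d\<bar> \<le> 10 * L * (opnorm d A / 2)"
    using abs_integral_lipschitz_qform_le[OF d A B AB q] by simp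
  also have "\<dots> \<le> 10 * L * (sqrt (opnorm d A * ln (real d)) + opnorm d B * ln (real d))"
    using half_le_sqrt_mult[OF opnorm_nonneg sph_harm2_opnorm_le_1[OF d A] ln_d]
      mult_nonneg_nonneg[OF opnorm_nonneg[of d B], of "ln (real d)"] ln_d lipschitz_on_nonneg[OF q]
    by (intro mult_left_mono) auto
  finally show "\<bar>\<integral>x. q (qform d A x) * qform d B x \<partial>sphere_unif d\<bar>
      \<le> 10 * L * (sqrt (opnorm d A * ln (real d)) + opnorm d B * ln (real d))" .
qed

end
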